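(* Under the standing setup (assumptions (A1)–(A4)), let $(W_n)_n$ be the wf-process and $X$ a random variable with distribution function $F$. (i) If $\mu<r$, then $q_W<1$. (ii) Assume $r\le m\mu\big(1-\sqrt{1-1/m}\big)$. If $\operatorname{Var}X<\frac{(m\mu-r)^2}{m(m-1)}-\mu^2$, then $q_W=1$.
   Context: Standing setup. On a probability space $(\Omega,\mathcal F,\mathrm P)$ there are three mutually independent double arrays $(D_n^k)_{n\ge0,k\ge1}$, $(X_n^k)_{n\ge0,k\ge1}$, $(R_n^k)_{n\ge0,k\ge1}$, each consisting of i.i.d. random variables: $D_n^k\in\{0,1,2,\dots\}$ with law $p_j=\mathrm P[D_n^k=j]$ and mean $m$; $X_n^k\ge0$ real-valued with continuous distribution function $F$ and mean $\mu$; $R_n^k\ge0$ real-valued with mean $r$. Standing assumptions: (A1) $1<m<\infty$, $r<\infty$, $0<\mu<\infty$; (A2) $p_0>0$ and $p_k>0$ for some $k\ge2$; (A3) for the process under consideration started at $1$, every finite positive state is reached with positive probability; (A4) $D_n^k,X_n^k,R_n^k$ have finite variances. Write $D_n(k)=\sum_{j=1}^kD_n^j$, $R_n(k)=\sum_{j=1}^kR_n^j$. For $(x_k)_{k=1}^t$ let $x_{1,t}\le\dots\le x_{t,t}$ be its order statistics. The weakest-first counting function is $N(0,\varnothing,s)=0$ and, for $t\ge1$, $N(t,(x_k)_{k=1}^t,s)=0$ if $x_{1,t}>s$, otherwise $\max\{1\le k\le t:\sum_{j=1}^kx_{j,t}\le s\}$. The wf-process is $W_0=1$, $W_{n+1}=N\big(D_n(W_n),(X_n^k)_{k=1}^{D_n(W_n)},R_n(W_n)\big)$,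 and $q_W=\mathrm P[\lim_nW_n=0\mid W_0=1]$. *)

theory Defs
  imports "HOL-Probability.Probability"
begin

text \<open>Weakest-first counting function N(t, (x_k)_{k=1}^t, s); the list xs is (x_1,...,x_t),
  so t = length xs. Order statistics are given by sorting.\<close>
definition wf_count :: "real list \<Rightarrow> real \<Rightarrow> nat" where
  "wf_count xs s =
     (if xs = [] then 0
      else if hd (sort xs) > s then 0
      else (GREATEST k. 1 \<le> k \<and> k \<le> length xs \<and> sum_list (take k (sort xs)) \<le> s))"

primrec wf_proc :: "(nat \<Rightarrow> nat \<Rightarrow> 'a \<Rightarrow> nat) \<Rightarrow> (nat \<Rightarrow> nat \<Rightarrow> 'a \<Rightarrow> real) \<Rightarrow>
    (nat \<Rightarrow> nat \<Rightarrow> 'a \<Rightarrow> real) \<Rightarrow> nat \<Rightarrow> 'a \<Rightarrow> nat" where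
  "wf_proc D X R 0 \<omega> = 1"
| "wf_proc D X R (Suc n) \<omega> =
     (let w = wf_proc D X R n \<omega>;
          d = (\<Sum>j=1..w. D n j \<omega>)
      in wf_count (map (\<lambda>k. X n k \<omega>) [1..<d+1]) (\<Sum>j=1..w. R n j \<omega>))"

text \<open>All variables of the three arrays collected into one real-valued family,
  so that their joint (mutual) independence can be stated with indep_vars.\<close>
definition wf_family :: "(nat \<Rightarrow> nat \<Rightarrow> 'a \<Rightarrow> nat) \<Rightarrow> (nat \<Rightarrow> nat \<Rightarrow> 'a \<Rightarrow> real) \<Rightarrow>
    (nat \<Rightarrow> nat \<Rightarrow> 'a \<Rightarrow> real) \<Rightarrow> (nat \<times> nat) + (nat \<times> nat) + (nat \<times> nat) \<Rightarrow> 'a \<Rightarrow> real" where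
  "wf_family D X R i =
     (case i of Inl (n, k) \<Rightarrow> (\<lambda>\<omega>. real (D n k \<omega>))
              | Inr (Inl (n, k)) \<Rightarrow> X n k
              | Inr (Inr (n, k)) \<Rightarrow> R n k)"

definition wf_index :: "((nat \<times> nat) + (nat \<times> nat) + (nat \<times> nat)) set" where
  "wf_index = {i. case i of Inl (n, k) \<Rightarrow> 1 \<le> k
                         | Inr (Inl (n, k)) \<Rightarrow> 1 \<le> k
                         | Inr (Inr (n, k)) \<Rightarrow> 1 \<le> k}"

end

theory Submission
  imports Defs
begin

(*
  Write m, mu, r for the means of D, X and R.

  For a > 0 the number of admitted children is at most
  a * resource + (sum over all children of max 0 (1 - a * weight))  [wf_count_upper].
  Conditioning on the current size (generation n is independent of the past) and Wald's
  identity give E W_(n+1) <= c(t) E W_n with c(t) = 2 t r + m E (1 - t X)^2 for a = 2 t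
  [nn_integral_W_Suc_le].  Under the hypotheses of (ii) the choice
  t = (m mu - r) / (m E X^2) gives c(t) < 1 [contraction_parameter], so
  P[W_n > 0] <= c(t)^n -> 0 [extinction_certain].

  If mu < r, a typical generation of size v admits at least
  rho' * v children for some rho' > 1 [step_ge_if_typical]; by Chebyshev's inequality the
  failure probability is at most C / v [growth_failure_bound].  From a reachable state
  w0 large enough, geometric growth breaks down at step k with probability at most
  C / (rho'^k w0) times that of the start event; summing, growth continues forever with
  positive probability, and then the process never dies out [survival].
*)

section \<open>The weakest-first counting function\<close>

lemma submset_add_mset_notin:
  "y \<notin># A \<Longrightarrow> A \<subseteq># add_mset y B \<Longrightarrow> A \<subseteq># B"
  by (simp add: inter_add_left1 subset_mset.inf.absorb_iff2)

lemma sum_take_sorted_le_submset: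
  fixes ys :: "real list"
  assumes "sorted ys" "A \<subseteq># mset ys" "size A = k"
  shows "sum_list (take k ys) \<le> sum_mset A"
  using assms
proof (induction ys arbitrary: A k)
  case Nil then show ?case by simp
next
  case (Cons y ys)
  have sy: "sorted ys" and ge: "\<forall>x\<in>set ys. y \<le> x" using Cons.prems by auto
  show ?case
  proof (cases k)
    case 0 then show ?thesis using Cons.prems by simp
  next
    case (Suc k')
    show ?thesis
    proof (cases "y \<in># A")
      case True
      define A' where "A' = A - {#y#}"
      have A: "A = add_mset y A'" using True unfolding A'_def by simp
      have "sum_list (take k' ys) \<le> sum_mset A'"
        using Cons.IH[OF sy] Cons.prems(2,3) A Suc by simp
      then show ?thesis using A Suc by simp
    next
      case False
      have sub: "A \<subseteq># mset ys" using submset_add_mset_notin[OF False] Cons.prems(2) by simp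
      have IH: "sum_list (take k ys) \<le> sum_mset A" using Cons.IH sy sub Cons.prems(3) by blast
      have kl: "k \<le> length ys" using size_mset_mono[OF sub] Cons.prems(3) by simp
      have "take k ys = take k' ys @ [ys ! k']" using kl Suc by (simp add: take_Suc_conv_app_nth)
      moreover have "y \<le> ys ! k'" using ge kl Suc by auto
      ultimately have "y + sum_list (take k' ys) \<le> sum_list (take k ys)" by simp
      then show ?thesis using IH Suc by simp
    qed
  qed
qed

lemma sum_take_mono:
  fixes ys :: "real list"
  assumes "\<forall>x\<in>set ys. 0 \<le> x" "j \<le> k"
  shows "sum_list (take j ys) \<le> sum_list (take k ys)"
proof -
  have "take k ys = take j ys @ take (k - j) (drop j ys)"
    using assms(2) by (metis le_add_diff_inverse take_add)
  moreover have "0 \<le> sum_list (take (k - j) (drop j ys))"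
    using assms(1) by (intro sum_list_nonneg) (meson in_set_dropD in_set_takeD)
  ultimately show ?thesis by simp
qed

lemma wf_count_ge_iff:
  assumes nn: "\<forall>x\<in>set xs. 0 \<le> x" and k: "1 \<le> k"
  shows "k \<le> wf_count xs s \<longleftrightarrow> k \<le> length xs \<and> sum_list (take k (sort xs)) \<le> s"
proof (cases "xs = []")
  case True then show ?thesis using k by (simp add: wf_count_def)
next
  case ne: False
  have nns: "\<forall>x\<in>set (sort xs). 0 \<le> x" using nn by simp
  have "sort xs \<noteq> []" using ne by (metis length_0_conv length_sort)
  then have t1: "sum_list (take 1 (sort xs)) = hd (sort xs)" by (cases "sort xs") auto
  show ?thesis
  proof (cases "hd (sort xs) > s")
    case True
    then show ?thesis using sum_take_mono[OF nns k] t1 ne k by (simp add: wf_count_def)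
  next
    case False
    let ?P = "\<lambda>j. 1 \<le> j \<and> j \<le> length xs \<and> sum_list (take j (sort xs)) \<le> s"
    have wc: "wf_count xs s = (GREATEST j. ?P j)" using False ne by (simp add: wf_count_def)
    have "?P 1" using False t1 ne by (simp add: Suc_leI)
    then have PG: "?P (GREATEST j. ?P j)" using GreatestI_nat[of ?P 1 "length xs"] by blast
    show ?thesis
    proof
      assume "k \<le> wf_count xs s"
      then show "k \<le> length xs \<and> sum_list (take k (sort xs)) \<le> s"
        using wc PG sum_take_mono[OF nns, of k "GREATEST j. ?P j"] by auto
    next
      assume "k \<le> length xs \<and> sum_list (take k (sort xs)) \<le> s"
      then show "k \<le> wf_count xs s" using k wc Greatest_le_nat[of ?P k "length xs"] by simp
    qed
  qed
qed

lemma submset_eq_image_positions: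
  fixes xs :: "'b list"
  assumes "A \<subseteq># mset xs"
  shows "\<exists>K\<subseteq>{..<length xs}. image_mset (nth xs) (mset_set K) = A"
  using assms
proof (induction xs arbitrary: A)
  case Nil then show ?case by simp
next
  case (Cons x xs)
  have shift: "image_mset (nth (x # xs)) (mset_set (Suc ` K)) = image_mset (nth xs) (mset_set K)"
    if "finite K" for K
    using that by (simp add: image_mset_mset_set[symmetric] multiset.map_comp comp_def)
  show ?case
  proof (cases "x \<in># A")
    case True
    define A' where "A' = A - {#x#}"
    have A: "A = add_mset x A'" using True unfolding A'_def by simp
    have "A' \<subseteq># mset xs" using Cons.prems A by simp
    then obtain K where K: "K \<subseteq> {..<length xs}" "image_mset (nth xs) (mset_set K) = A'"
      using Cons.IH by blast
    have fK: "finite K" using K(1) finite_subset by blast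
    have "0 \<notin> Suc ` K" by auto
    then have "image_mset (nth (x # xs)) (mset_set (insert 0 (Suc ` K))) = A"
      using shift[OF fK] K(2) A fK by simp
    moreover have "insert 0 (Suc ` K) \<subseteq> {..<length (x # xs)}" using K(1) by auto
    ultimately show ?thesis by blast
  next
    case False
    have "A \<subseteq># mset xs" using submset_add_mset_notin[OF False] Cons.prems by simp
    then obtain K where K: "K \<subseteq> {..<length xs}" "image_mset (nth xs) (mset_set K) = A"
      using Cons.IH by blast
    have fK: "finite K" using K(1) finite_subset by blast
    have "image_mset (nth (x # xs)) (mset_set (Suc ` K)) = A" using shift[OF fK] K(2) by simp
    moreover have "Suc ` K \<subseteq> {..<length (x # xs)}" using K(1) by auto
    ultimately show ?thesis by blast
  qed
qed

text \<open>The k lightest entries fit into s iff some k positions do; this formulation avoids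
  sorting and is what makes the counting function measurable.\<close>
lemma sum_smallest_le_iff:
  fixes xs :: "real list"
  assumes "k \<le> length xs"
  shows "sum_list (take k (sort xs)) \<le> s \<longleftrightarrow>
    (\<exists>K\<subseteq>{..<length xs}. card K = k \<and> (\<Sum>i\<in>K. xs ! i) \<le> s)"
proof
  assume a: "sum_list (take k (sort xs)) \<le> s"
  have "mset (take k (sort xs)) \<subseteq># mset (sort xs)"
    by (metis append_take_drop_id mset_append mset_subset_eq_add_left)
  then have "mset (take k (sort xs)) \<subseteq># mset xs" by simp
  then obtain K where K: "K \<subseteq> {..<length xs}"
      "image_mset (nth xs) (mset_set K) = mset (take k (sort xs))"
    using submset_eq_image_positions by blast
  have fK: "finite K" using K(1) finite_subset by blast
  have "card K = k" using arg_cong[OF K(2), of size] fK assms by simp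
  moreover have "(\<Sum>i\<in>K. xs ! i) = sum_list (take k (sort xs))"
    unfolding sum_unfold_sum_mset K(2) by (simp add: sum_mset_sum_list)
  ultimately show "\<exists>K\<subseteq>{..<length xs}. card K = k \<and> (\<Sum>i\<in>K. xs ! i) \<le> s"
    using K(1) a by auto
next
  assume "\<exists>K\<subseteq>{..<length xs}. card K = k \<and> (\<Sum>i\<in>K. xs ! i) \<le> s"
  then obtain K where K: "K \<subseteq> {..<length xs}" "card K = k" "(\<Sum>i\<in>K. xs ! i) \<le> s" by blast
  have fK: "finite K" using K(1) finite_subset by blast
  have "mset xs = image_mset (nth xs) (mset_set {..<length xs})"
    by (metis map_nth mset_map mset_set_upto_eq_mset_upto)
  then have sub: "image_mset (nth xs) (mset_set K) \<subseteq># mset (sort xs)"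
    using K(1) fK by (simp add: image_mset_subseteq_mono)
  have "sum_list (take k (sort xs)) \<le> sum_mset (image_mset (nth xs) (mset_set K))"
    by (rule sum_take_sorted_le_submset[OF sorted_sort sub]) (use fK K(2) in simp)
  then show "sum_list (take k (sort xs)) \<le> s" using K(3) by (simp add: sum_unfold_sum_mset)
qed

lemma sorted_prefix_mean_le:
  fixes ys :: "real list"
  assumes "sorted ys" "k \<le> length ys"
  shows "real (length ys) * sum_list (take k ys) \<le> real k * sum_list ys"
proof (cases "k < length ys")
  case False then show ?thesis using assms by simp
next
  case True
  define c where "c = ys ! k"
  define n where "n = length ys"
  have kn: "k \<le> n" using True n_def by simp
  have a: "sum_list (take k ys) = (\<Sum>i<k. ys ! i)"
    using True by (simp add: sum_list_sum_nth lessThan_atLeast0 min_def)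
  have b: "sum_list ys = (\<Sum>i<k. ys ! i) + (\<Sum>i\<in>{k..<n}. ys ! i)"
    unfolding n_def sum_list_sum_nth using True
    by (metis atLeast0LessThan less_imp_le_nat sum.atLeastLessThan_concat zero_le)
  have low: "(\<Sum>i<k. ys ! i) \<le> real k * c"
    using sum_mono[of "{..<k}" "\<lambda>i. ys ! i" "\<lambda>_. c"] assms(1) True
    unfolding c_def by (simp add: sorted_nth_mono)
  have high: "real (n - k) * c \<le> (\<Sum>i\<in>{k..<n}. ys ! i)"
    using sum_mono[of "{k..<n}" "\<lambda>_. c" "\<lambda>i. ys ! i"] assms(1)
    unfolding c_def n_def by (simp add: sorted_nth_mono)
  have "real n * (\<Sum>i<k. ys ! i) = real k * (\<Sum>i<k. ys ! i) + real (n - k) * (\<Sum>i<k. ys ! i)"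
    using kn by (simp add: of_nat_diff algebra_simps)
  also have "\<dots> \<le> real k * (\<Sum>i<k. ys ! i) + real (n - k) * (real k * c)"
    using low by (intro add_left_mono mult_left_mono) auto
  also have "\<dots> \<le> real k * (\<Sum>i<k. ys ! i) + real k * (\<Sum>i\<in>{k..<n}. ys ! i)"
    using mult_left_mono[OF high, of "real k"] by (simp add: ac_simps)
  finally show ?thesis unfolding a b n_def by (simp add: algebra_simps)
qed

lemma wf_count_lower:
  fixes xs :: "real list"
  assumes nn: "\<forall>x\<in>set xs. 0 \<le> x" and k: "1 \<le> k" "k \<le> L" and L: "L \<le> length xs"
    and le: "real k * sum_list (take L xs) \<le> real L * s"
  shows "k \<le> wf_count xs s"
proof -
  define ys where "ys = sort (take L xs)"
  have ly: "length ys = L" using L unfolding ys_def by simp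
  have "real L * sum_list (take k ys) \<le> real k * sum_list ys"
    using sorted_prefix_mean_le[of ys k] k ly unfolding ys_def by simp
  also have "\<dots> = real k * sum_list (take L xs)" unfolding ys_def
    by (simp add: sum_mset_sum_list[symmetric])
  also have "\<dots> \<le> real L * s" by (rule le)
  finally have "sum_list (take k ys) \<le> s" using k by simp
  moreover have "mset (take k ys) \<subseteq># mset (sort xs)"
  proof -
    have "mset (take k ys) \<subseteq># mset ys"
      by (metis append_take_drop_id mset_append mset_subset_eq_add_left)
    also have "mset ys = mset (take L xs)" unfolding ys_def by simp
    also have "\<dots> \<subseteq># mset xs"
      by (metis append_take_drop_id mset_append mset_subset_eq_add_left)
    finally show ?thesis by simp
  qed
  then have "sum_list (take k (sort xs)) \<le> sum_mset (mset (take k ys))"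
    using sum_take_sorted_le_submset[OF sorted_sort] k ly by simp
  ultimately have "sum_list (take k (sort xs)) \<le> s" by (simp add: sum_mset_sum_list)
  then show ?thesis using wf_count_ge_iff[OF nn k(1)] k L by simp
qed

text \<open>Upper bound used for the first-moment estimate: each admitted child of weight x
  contributes at most a x + max 0 (1 - a x), and the admitted weights sum to at most s.\<close>
lemma wf_count_upper:
  fixes xs :: "real list"
  assumes nn: "\<forall>x\<in>set xs. 0 \<le> x" and s: "0 \<le> s" and a: "0 < a"
  shows "real (wf_count xs s) \<le> a * s + sum_list (map (\<lambda>x. max 0 (1 - a * x)) xs)"
proof (cases "wf_count xs s = 0")
  case True
  have "0 \<le> sum_list (map (\<lambda>x. max 0 (1 - a * x)) xs)" by (intro sum_list_nonneg) auto
  then show ?thesis using True s a by simp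
next
  case False
  define k where "k = wf_count xs s"
  let ?f = "\<lambda>x. max 0 (1 - a * x)"
  let ?t = "take k (sort xs)"
  have "k \<le> length xs" and ks: "sum_list ?t \<le> s"
    using wf_count_ge_iff[OF nn, of k s] False k_def by auto
  then have "real k = sum_list (map (\<lambda>x. 1::real) ?t)" by (simp add: sum_list_triv)
  also have "\<dots> \<le> sum_list (map (\<lambda>x. a * x + ?f x) ?t)"
    by (intro sum_list_mono) auto
  also have "\<dots> = a * sum_list ?t + sum_list (map ?f ?t)"
    by (simp add: sum_list_addf sum_list_const_mult)
  also have "\<dots> \<le> a * s + sum_list (map ?f (sort xs))"
  proof -
    have "sum_list (map ?f (sort xs)) = sum_list (map ?f ?t) + sum_list (map ?f (drop k (sort xs)))"
      by (metis append_take_drop_id map_append sum_list_append)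
    moreover have "0 \<le> sum_list (map ?f (drop k (sort xs)))" by (intro sum_list_nonneg) auto
    ultimately show ?thesis using ks a by (smt (verit) mult_left_mono)
  qed
  also have "sum_list (map ?f (sort xs)) = sum_list (map ?f xs)"
  proof -
    have "mset (map ?f (sort xs)) = mset (map ?f xs)" by simp
    then show ?thesis by (metis sum_mset_sum_list)
  qed
  finally show ?thesis unfolding k_def .
qed


section \<open>One generation as a function of the population size\<close>

definition wf_step :: "(nat \<Rightarrow> nat \<Rightarrow> 'a \<Rightarrow> nat) \<Rightarrow> (nat \<Rightarrow> nat \<Rightarrow> 'a \<Rightarrow> real) \<Rightarrow>
    (nat \<Rightarrow> nat \<Rightarrow> 'a \<Rightarrow> real) \<Rightarrow> nat \<Rightarrow> nat \<Rightarrow> 'a \<Rightarrow> nat" where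
  "wf_step D X R n w \<omega> =
     wf_count (map (\<lambda>k. X n k \<omega>) [1..<(\<Sum>j=1..w. D n j \<omega>)+1]) (\<Sum>j=1..w. R n j \<omega>)"

lemma wf_proc_Suc_step: "wf_proc D X R (Suc n) \<omega> = wf_step D X R n (wf_proc D X R n \<omega>) \<omega>"
  by (simp add: wf_step_def Let_def)

lemma wf_step_ge_iff:
  assumes nn: "\<forall>k. 0 \<le> X n k \<omega>" and k: "1 \<le> k"
  shows "k \<le> wf_step D X R n w \<omega> \<longleftrightarrow>
    (\<exists>d. (\<Sum>j=1..w. D n j \<omega>) = d \<and> k \<le> d \<and>
      (\<exists>K\<in>{K. K \<subseteq> {..<d} \<and> card K = k}. (\<Sum>i\<in>K. X n (Suc i) \<omega>) \<le> (\<Sum>j=1..w. R n j \<omega>)))"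
proof -
  define d where "d = (\<Sum>j=1..w. D n j \<omega>)"
  define xs where "xs = map (\<lambda>k. X n k \<omega>) [1..<d+1]"
  have lx: "length xs = d" unfolding xs_def by simp
  have nx: "\<And>i. i < d \<Longrightarrow> xs ! i = X n (Suc i) \<omega>" unfolding xs_def by (simp del: upt_Suc)
  have "k \<le> wf_step D X R n w \<omega> \<longleftrightarrow>
      k \<le> length xs \<and> sum_list (take k (sort xs)) \<le> (\<Sum>j=1..w. R n j \<omega>)"
    unfolding wf_step_def d_def[symmetric] xs_def[symmetric]
    by (rule wf_count_ge_iff[OF _ k]) (use nn in \<open>auto simp: xs_def\<close>)
  also have "\<dots> \<longleftrightarrow> k \<le> d \<and>
      (\<exists>K\<subseteq>{..<d}. card K = k \<and> (\<Sum>i\<in>K. xs ! i) \<le> (\<Sum>j=1..w. R n j \<omega>))"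
    using sum_smallest_le_iff[of k xs] lx by auto
  also have "\<dots> \<longleftrightarrow> k \<le> d \<and>
      (\<exists>K\<subseteq>{..<d}. card K = k \<and> (\<Sum>i\<in>K. X n (Suc i) \<omega>) \<le> (\<Sum>j=1..w. R n j \<omega>))"
    using nx by (metis (no_types, lifting) lessThan_iff subsetD sum.cong)
  finally show ?thesis unfolding d_def by auto
qed

lemma measurable_nat_if_real:
  assumes "(\<lambda>\<omega>. real (f \<omega>)) \<in> borel_measurable N"
  shows "f \<in> measurable N (count_space UNIV)"
proof (subst measurable_count_space_eq2_countable, safe)
  fix d :: nat
  have "(\<lambda>\<omega>. real (f \<omega>)) -` {real d} \<inter> space N \<in> sets N"
    using assms by (rule measurable_sets) simp
  then show "f -` {d} \<inter> space N \<in> sets N" by (simp add: vimage_def)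
qed auto

lemma wf_step_measurable:
  assumes Dm: "\<And>k. 1 \<le> k \<Longrightarrow> (\<lambda>\<omega>. real (D n k \<omega>)) \<in> borel_measurable N"
    and Xm: "\<And>k. 1 \<le> k \<Longrightarrow> X n k \<in> borel_measurable N"
    and Rm: "\<And>k. 1 \<le> k \<Longrightarrow> R n k \<in> borel_measurable N"
    and nn: "\<And>\<omega> k. \<omega> \<in> space N \<Longrightarrow> 0 \<le> X n k \<omega>"
  shows "wf_step D X R n w \<in> measurable N (count_space UNIV)"
proof -
  have Dsum: "(\<lambda>\<omega>. \<Sum>j=1..w. D n j \<omega>) \<in> measurable N (count_space UNIV)"
    using Dm by (intro measurable_nat_if_real) (simp add: borel_measurable_sum)
  have Rsum: "(\<lambda>\<omega>. \<Sum>j=1..w. R n j \<omega>) \<in> borel_measurable N"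
    using Rm by (simp add: borel_measurable_sum)
  have ge: "{\<omega>\<in>space N. k \<le> wf_step D X R n w \<omega>} \<in> sets N" for k
  proof (cases "k = 0")
    case True then show ?thesis by simp
  next
    case False
    let ?good = "\<lambda>\<omega> d. (\<Sum>j=1..w. D n j \<omega>) = d \<and> k \<le> d \<and>
        (\<exists>K\<in>{K. K \<subseteq> {..<d} \<and> card K = k}. (\<Sum>i\<in>K. X n (Suc i) \<omega>) \<le> (\<Sum>j=1..w. R n j \<omega>))"
    have eq: "{\<omega>\<in>space N. k \<le> wf_step D X R n w \<omega>} = {\<omega>\<in>space N. \<exists>d. ?good \<omega> d}"
    proof (intro Collect_cong conj_cong refl)
      fix \<omega> assume "\<omega> \<in> space N"
      then have "\<forall>k. 0 \<le> X n k \<omega>" using nn by blast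
      then show "k \<le> wf_step D X R n w \<omega> \<longleftrightarrow> (\<exists>d. ?good \<omega> d)"
        using wf_step_ge_iff[where X=X and n=n and \<omega>=\<omega> and k=k and D=D and R=R and w=w] False
        by simp
    qed
    have "Measurable.pred N (\<lambda>\<omega>. \<exists>d. ?good \<omega> d)"
    proof (intro pred_intros_countable pred_intros_logic pred_intros_finite)
      fix d :: nat and K :: "nat set"
      show "Measurable.pred N (\<lambda>\<omega>. (\<Sum>j=1..w. D n j \<omega>) = d)" using Dsum by measurable
      have "(\<lambda>\<omega>. \<Sum>i\<in>K. X n (Suc i) \<omega>) \<in> borel_measurable N"
        using Xm by (intro borel_measurable_sum) auto
      then show "Measurable.pred N (\<lambda>\<omega>. (\<Sum>i\<in>K. X n (Suc i) \<omega>) \<le> (\<Sum>j=1..w. R n j \<omega>))"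
        using Rsum by measurable
    qed simp_all
    then show ?thesis unfolding eq by (simp add: pred_def)
  qed
  show ?thesis
  proof (subst measurable_count_space_eq2_countable, safe)
    fix j :: nat
    have "wf_step D X R n w -` {j} \<inter> space N =
        {\<omega>\<in>space N. j \<le> wf_step D X R n w \<omega>} - {\<omega>\<in>space N. Suc j \<le> wf_step D X R n w \<omega>}"
      by auto
    then show "wf_step D X R n w -` {j} \<inter> space N \<in> sets N" using ge by simp
  qed auto
qed

lemma wf_proc_measurable:
  assumes Dm: "\<And>j k. j < n \<Longrightarrow> 1 \<le> k \<Longrightarrow> (\<lambda>\<omega>. real (D j k \<omega>)) \<in> borel_measurable N"
    and Xm: "\<And>j k. j < n \<Longrightarrow> 1 \<le> k \<Longrightarrow> X j k \<in> borel_measurable N"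
    and Rm: "\<And>j k. j < n \<Longrightarrow> 1 \<le> k \<Longrightarrow> R j k \<in> borel_measurable N"
    and nn: "\<And>\<omega> j k. \<omega> \<in> space N \<Longrightarrow> 0 \<le> X j k \<omega>"
  shows "wf_proc D X R n \<in> measurable N (count_space UNIV)"
  using assms
proof (induction n)
  case 0 then show ?case by simp
next
  case (Suc n)
  have IH: "wf_proc D X R n \<in> measurable N (count_space UNIV)"
    using Suc by simp
  have "(\<lambda>\<omega>. wf_step D X R n (wf_proc D X R n \<omega>) \<omega>) \<in> measurable N (count_space UNIV)"
    by (rule measurable_compose_countable[OF wf_step_measurable IH]) (use Suc.prems in auto)
  then show ?case unfolding wf_proc_Suc_step[abs_def] .
qed

lemma wf_proc_absorbing: "wf_proc D X R n \<omega> = 0 \<Longrightarrow> wf_proc D X R (n + j) \<omega> = 0"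
  by (induction j) (simp_all add: Let_def wf_count_def)

text \<open>Since zero is absorbing, convergence to 0 means hitting 0.\<close>
lemma wf_proc_tendsto_0_iff:
  "(\<lambda>n. wf_proc D X R n \<omega>) \<longlonglongrightarrow> 0 \<longleftrightarrow> (\<exists>n. wf_proc D X R n \<omega> = 0)"
proof
  assume "(\<lambda>n. wf_proc D X R n \<omega>) \<longlonglongrightarrow> 0"
  then show "\<exists>n. wf_proc D X R n \<omega> = 0"
    unfolding tendsto_discrete eventually_sequentially by blast
next
  assume "\<exists>n. wf_proc D X R n \<omega> = 0"
  then obtain n where "wf_proc D X R n \<omega> = 0" by blast
  then have "\<forall>j\<ge>n. wf_proc D X R j \<omega> = 0"
    using wf_proc_absorbing by (metis le_add_diff_inverse)
  then show "(\<lambda>n. wf_proc D X R n \<omega>) \<longlonglongrightarrow> 0"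
    by (intro tendsto_eventually) (auto simp: eventually_sequentially)
qed


section \<open>Independence of disjoint parts of the arrays\<close>

lemma (in prob_space) nn_integral_mult_indep_sigma:
  fixes f g :: "'a \<Rightarrow> ennreal"
  assumes indep: "indep_set (sets N1) (sets N2)"
    and sub: "subalgebra M N1" "subalgebra M N2"
    and f: "f \<in> borel_measurable N1" and g: "g \<in> borel_measurable N2"
  shows "(\<integral>\<^sup>+\<omega>. f \<omega> * g \<omega> \<partial>M) = (\<integral>\<^sup>+\<omega>. f \<omega> \<partial>M) * (\<integral>\<^sup>+\<omega>. g \<omega> \<partial>M)"
proof -
  let ?Y = "case_bool f g"
  have space: "space N1 = space M" "space N2 = space M" using sub by (auto simp: subalgebra_def)
  have sets_sub: "{?Y i -` A \<inter> space M | A. A \<in> sets borel} \<subseteq> case_bool (sets N1) (sets N2) i"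
    for i
  proof (cases i)
    case True then show ?thesis using measurable_sets[OF f] space(1) by auto
  next
    case False then show ?thesis using measurable_sets[OF g] space(2) by auto
  qed
  have "random_variable borel (?Y i)" for i
    using measurable_from_subalg[OF sub(1) f] measurable_from_subalg[OF sub(2) g]
    by (cases i) auto
  moreover have "indep_sets (\<lambda>i. {?Y i -` A \<inter> space M | A. A \<in> sets borel}) UNIV"
    using indep sets_sub unfolding indep_set_def by (rule indep_sets_mono_sets)
  ultimately have "indep_vars (\<lambda>_. borel) ?Y UNIV"
    unfolding indep_vars_def2 by simp
  from indep_vars_nn_integral[of UNIV, OF _ this] show ?thesis
    by (simp add: UNIV_bool mult.commute)
qed

locale wf_model = prob_space M for M :: "'a measure" +
  fixes D :: "nat \<Rightarrow> nat \<Rightarrow> 'a \<Rightarrow> nat" and X R :: "nat \<Rightarrow> nat \<Rightarrow> 'a \<Rightarrow> real"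
  assumes D_meas: "\<And>n k. D n k \<in> measurable M (count_space UNIV)"
    and X_meas: "\<And>n k. X n k \<in> borel_measurable M"
    and R_meas: "\<And>n k. R n k \<in> borel_measurable M"
    and indep: "indep_vars (\<lambda>_. borel) (wf_family D X R) wf_index"
    and X_nonneg: "\<And>n k \<omega>. \<omega> \<in> space M \<Longrightarrow> X n k \<omega> \<ge> 0"
    and R_nonneg: "\<And>n k \<omega>. \<omega> \<in> space M \<Longrightarrow> R n k \<omega> \<ge> 0"
begin

abbreviation Fam :: "(nat \<times> nat) + (nat \<times> nat) + (nat \<times> nat) \<Rightarrow> 'a \<Rightarrow> real"
  where "Fam \<equiv> wf_family D X R"
abbreviation W :: "nat \<Rightarrow> 'a \<Rightarrow> nat" where "W \<equiv> wf_proc D X R"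
abbreviation step :: "nat \<Rightarrow> nat \<Rightarrow> 'a \<Rightarrow> nat" where "step \<equiv> wf_step D X R"

lemma Fam_simps:
  "Fam (Inl (n, k)) = (\<lambda>\<omega>. real (D n k \<omega>))"
  "Fam (Inr (Inl (n, k))) = X n k"
  "Fam (Inr (Inr (n, k))) = R n k"
  by (simp_all add: wf_family_def)

lemma Fam_meas: "Fam i \<in> borel_measurable M"
proof (cases i)
  case (Inl a) then show ?thesis using D_meas by (cases a) (auto simp: wf_family_def)
next
  case (Inr b) then show ?thesis using X_meas R_meas
    by (cases b) (auto simp: wf_family_def split: prod.split)
qed

definition fam_sigma :: "((nat \<times> nat) + (nat \<times> nat) + (nat \<times> nat)) set \<Rightarrow> 'a measure" where
  "fam_sigma J = sigma (space M) (\<Union>i\<in>J. {Fam i -` A \<inter> space M | A. A \<in> sets borel})"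

lemma sets_fam_sigma:
  "sets (fam_sigma J) = sigma_sets (space M) (\<Union>i\<in>J. {Fam i -` A \<inter> space M | A. A \<in> sets borel})"
  unfolding fam_sigma_def by (rule sets_measure_of) auto

lemma space_fam_sigma[simp]: "space (fam_sigma J) = space M"
  unfolding fam_sigma_def by (rule space_measure_of) auto

lemma subalgebra_fam_sigma: "subalgebra M (fam_sigma J)"
proof -
  have "(\<Union>i\<in>J. {Fam i -` A \<inter> space M | A. A \<in> sets borel}) \<subseteq> sets M"
    using Fam_meas by (auto intro: measurable_sets)
  then have "sigma_sets (space M) (\<Union>i\<in>J. {Fam i -` A \<inter> space M | A. A \<in> sets borel}) \<subseteq> sets M"
    by (rule sets.sigma_sets_subset)
  then show ?thesis unfolding subalgebra_def sets_fam_sigma by simp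
qed

lemma sets_fam_sigma_subset: "sets (fam_sigma J) \<subseteq> sets M"
  using subalgebra_fam_sigma by (auto simp: subalgebra_def)

lemma Fam_fam_sigma: "i \<in> J \<Longrightarrow> Fam i \<in> borel_measurable (fam_sigma J)"
  unfolding measurable_def by (auto simp: sets_fam_sigma intro!: sigma_sets.Basic)

lemma indep_fam_sigma:
  assumes "J1 \<inter> J2 = {}" "J1 \<subseteq> wf_index" "J2 \<subseteq> wf_index"
  shows "indep_set (sets (fam_sigma J1)) (sets (fam_sigma J2))"
proof -
  let ?E = "\<lambda>i. {Fam i -` A \<inter> space M | A. A \<in> sets borel}"
  have "indep_sets ?E wf_index" using indep unfolding indep_vars_def2 by auto
  then have "indep_sets ?E (\<Union>j\<in>UNIV. case_bool J1 J2 j)"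
    by (rule indep_sets_mono_index[rotated]) (use assms in \<open>auto split: bool.splits\<close>)
  then have "indep_sets (\<lambda>j. sigma_sets (space M) (\<Union>i\<in>case_bool J1 J2 j. ?E i)) UNIV"
  proof (rule indep_sets_collect_sigma)
    fix i show "Int_stable (?E i)"
    proof (rule Int_stableI)
      fix a b assume "a \<in> ?E i" "b \<in> ?E i"
      then obtain A B where "A \<in> sets borel" "B \<in> sets borel"
        "a = Fam i -` A \<inter> space M" "b = Fam i -` B \<inter> space M" by auto
      then show "a \<inter> b \<in> ?E i" by (intro CollectI exI[of _ "A \<inter> B"]) auto
    qed
  qed (use assms in \<open>auto simp: disjoint_family_on_def split: bool.split\<close>)
  then show ?thesis
    unfolding indep_set_def sets_fam_sigma
    by (rule indep_sets_cong[THEN iffD1, rotated -1]) (auto split: bool.split)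
qed

lemma prob_Int_fam_sigma:
  assumes "J1 \<inter> J2 = {}" "J1 \<subseteq> wf_index" "J2 \<subseteq> wf_index"
    and "a \<in> sets (fam_sigma J1)" "b \<in> sets (fam_sigma J2)"
  shows "prob (a \<inter> b) = prob a * prob b"
  using indep_setD[OF indep_fam_sigma[OF assms(1-3)] assms(4,5)] .

lemma nn_integral_indicator_mult_fam_sigma:
  assumes "J1 \<inter> J2 = {}" "J1 \<subseteq> wf_index" "J2 \<subseteq> wf_index"
    and a: "a \<in> sets (fam_sigma J1)" and g: "g \<in> borel_measurable (fam_sigma J2)"
  shows "(\<integral>\<^sup>+\<omega>. indicator a \<omega> * g \<omega> \<partial>M) = emeasure M a * (\<integral>\<^sup>+\<omega>. g \<omega> \<partial>M)"
proof -
  have "a \<in> sets M" using a sets_fam_sigma_subset by blast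
  then show ?thesis
    using nn_integral_mult_indep_sigma[OF indep_fam_sigma[OF assms(1-3)] subalgebra_fam_sigma
        subalgebra_fam_sigma _ g, of "indicator a"] a
    by simp
qed

end

section \<open>Measurability of the process and independence of the past\<close>

lemma nn_integral_split_nat_value:
  fixes F :: "nat \<Rightarrow> 'a \<Rightarrow> ennreal"
  assumes V: "V \<in> measurable M (count_space UNIV)" and F: "\<And>w. F w \<in> borel_measurable M"
  shows "(\<integral>\<^sup>+\<omega>. F (V \<omega>) \<omega> \<partial>M) = (\<Sum>w. \<integral>\<^sup>+\<omega>. indicator {\<omega>\<in>space M. V \<omega> = w} \<omega> * F w \<omega> \<partial>M)"
proof -
  have "(\<integral>\<^sup>+\<omega>. F (V \<omega>) \<omega> \<partial>M) = (\<integral>\<^sup>+\<omega>. (\<Sum>w. indicator {\<omega>\<in>space M. V \<omega> = w} \<omega> * F w \<omega>) \<partial>M)"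
  proof (rule nn_integral_cong)
    fix \<omega> assume \<omega>: "\<omega> \<in> space M"
    have "(\<lambda>w. indicator {\<omega>\<in>space M. V \<omega> = w} \<omega> * F w \<omega>) = (\<lambda>w. if w = V \<omega> then F w \<omega> else 0)"
      using \<omega> by (auto simp: indicator_def)
    then show "F (V \<omega>) \<omega> = (\<Sum>w. indicator {\<omega>\<in>space M. V \<omega> = w} \<omega> * F w \<omega>)"
      using sums_single[of "V \<omega>" "\<lambda>w. F w \<omega>", THEN sums_unique] by simp
  qed
  also have "\<dots> = (\<Sum>w. \<integral>\<^sup>+\<omega>. indicator {\<omega>\<in>space M. V \<omega> = w} \<omega> * F w \<omega> \<partial>M)"
  proof (rule nn_integral_suminf)
    fix w
    have "{\<omega>\<in>space M. V \<omega> = w} \<in> sets M" using V by measurable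
    then show "(\<lambda>\<omega>. indicator {\<omega>\<in>space M. V \<omega> = w} \<omega> * F w \<omega>) \<in> borel_measurable M"
      using F by measurable
  qed
  finally show ?thesis .
qed

lemma nn_integral_nat_tail_sum:
  assumes V: "V \<in> measurable M (count_space UNIV)"
  shows "(\<integral>\<^sup>+\<omega>. of_nat (V \<omega>) \<partial>M) = (\<Sum>i. emeasure M {\<omega>\<in>space M. Suc i \<le> V \<omega>})"
proof -
  have "(\<integral>\<^sup>+\<omega>. of_nat (V \<omega>) \<partial>M) = (\<integral>\<^sup>+\<omega>. (\<Sum>i. indicator {\<omega>\<in>space M. Suc i \<le> V \<omega>} \<omega>) \<partial>M)"
  proof (rule nn_integral_cong)
    fix \<omega> assume \<omega>: "\<omega> \<in> space M"
    have "(\<Sum>i. indicator {\<omega>\<in>space M. Suc i \<le> V \<omega>} \<omega> :: ennreal) =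
        (\<Sum>i<V \<omega>. indicator {\<omega>\<in>space M. Suc i \<le> V \<omega>} \<omega>)"
      by (rule suminf_finite) (auto simp: indicator_def)
    also have "\<dots> = (\<Sum>i<V \<omega>. 1)" using \<omega> by (intro sum.cong) (auto simp: indicator_def)
    finally show "of_nat (V \<omega>) = (\<Sum>i. indicator {\<omega>\<in>space M. Suc i \<le> V \<omega>} \<omega> :: ennreal)"
      by simp
  qed
  also have "\<dots> = (\<Sum>i. emeasure M {\<omega>\<in>space M. Suc i \<le> V \<omega>})"
    using V by (subst nn_integral_suminf) auto
  finally show ?thesis .
qed

fun generation_of :: "(nat \<times> nat) + (nat \<times> nat) + (nat \<times> nat) \<Rightarrow> nat" where
  "generation_of (Inl (n, k)) = n"
| "generation_of (Inr (Inl (n, k))) = n"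
| "generation_of (Inr (Inr (n, k))) = n"

definition past_idx :: "nat \<Rightarrow> ((nat \<times> nat) + (nat \<times> nat) + (nat \<times> nat)) set" where
  "past_idx n = {i\<in>wf_index. generation_of i < n}"

definition gen_idx :: "nat \<Rightarrow> ((nat \<times> nat) + (nat \<times> nat) + (nat \<times> nat)) set" where
  "gen_idx n = {i\<in>wf_index. generation_of i = n}"

definition offspring_idx :: "nat \<Rightarrow> ((nat \<times> nat) + (nat \<times> nat) + (nat \<times> nat)) set" where
  "offspring_idx n = {Inl (n, k) | k. 1 \<le> k}"

lemma past_gen_idx:
  "past_idx n \<inter> gen_idx n = {}" "past_idx n \<subseteq> wf_index" "gen_idx n \<subseteq> wf_index"
  by (auto simp: past_idx_def gen_idx_def)

context wf_model
begin

lemma W_measurable_past: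
  assumes "m \<le> n" shows "W m \<in> measurable (fam_sigma (past_idx n)) (count_space UNIV)"
proof (rule wf_proc_measurable)
  fix j k :: nat assume "j < m" "1 \<le> k"
  then have "Inl (j, k) \<in> past_idx n" "Inr (Inl (j, k)) \<in> past_idx n" "Inr (Inr (j, k)) \<in> past_idx n"
    using assms by (auto simp: past_idx_def wf_index_def)
  then show "(\<lambda>\<omega>. real (D j k \<omega>)) \<in> borel_measurable (fam_sigma (past_idx n))"
    "X j k \<in> borel_measurable (fam_sigma (past_idx n))" "R j k \<in> borel_measurable (fam_sigma (past_idx n))"
    using Fam_fam_sigma Fam_simps by metis+
qed (use X_nonneg in auto)

lemma step_measurable_gen: "step n w \<in> measurable (fam_sigma (gen_idx n)) (count_space UNIV)"
proof (rule wf_step_measurable)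
  fix k :: nat assume "1 \<le> k"
  then have "Inl (n, k) \<in> gen_idx n" "Inr (Inl (n, k)) \<in> gen_idx n" "Inr (Inr (n, k)) \<in> gen_idx n"
    by (auto simp: gen_idx_def wf_index_def)
  then show "(\<lambda>\<omega>. real (D n k \<omega>)) \<in> borel_measurable (fam_sigma (gen_idx n))"
    "X n k \<in> borel_measurable (fam_sigma (gen_idx n))" "R n k \<in> borel_measurable (fam_sigma (gen_idx n))"
    using Fam_fam_sigma Fam_simps by metis+
qed (use X_nonneg in auto)

lemma W_meas[measurable]: "W n \<in> measurable M (count_space UNIV)"
  using measurable_from_subalg[OF subalgebra_fam_sigma W_measurable_past[OF order_refl]] .

lemma step_meas[measurable]: "step n w \<in> measurable M (count_space UNIV)"
  using measurable_from_subalg[OF subalgebra_fam_sigma step_measurable_gen] .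

lemma W_level_set_past: "{\<omega>\<in>space M. W n \<omega> = w} \<in> sets (fam_sigma (past_idx n))"
proof -
  have "W n -` {w} \<inter> space (fam_sigma (past_idx n)) \<in> sets (fam_sigma (past_idx n))"
    by (rule measurable_sets[OF W_measurable_past]) auto
  then show ?thesis by (simp add: vimage_def Int_def conj_commute)
qed

lemma extinction_event:
  "{\<omega>\<in>space M. (\<lambda>n. W n \<omega>) \<longlonglongrightarrow> 0} = (\<Union>n. {\<omega>\<in>space M. W n \<omega> = 0})"
  "{\<omega>\<in>space M. (\<lambda>n. W n \<omega>) \<longlonglongrightarrow> 0} \<in> events"
proof -
  show eq: "{\<omega>\<in>space M. (\<lambda>n. W n \<omega>) \<longlonglongrightarrow> 0} = (\<Union>n. {\<omega>\<in>space M. W n \<omega> = 0})"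
    by (auto simp: wf_proc_tendsto_0_iff)
  show "{\<omega>\<in>space M. (\<lambda>n. W n \<omega>) \<longlonglongrightarrow> 0} \<in> events"
    unfolding eq by measurable
qed

lemma nn_integral_W_Suc:
  "(\<integral>\<^sup>+\<omega>. of_nat (W (Suc n) \<omega>) \<partial>M) =
   (\<Sum>w. emeasure M {\<omega>\<in>space M. W n \<omega> = w} * (\<integral>\<^sup>+\<omega>. of_nat (step n w \<omega>) \<partial>M))"
proof -
  have "(\<integral>\<^sup>+\<omega>. of_nat (W (Suc n) \<omega>) \<partial>M) =
      (\<Sum>w. \<integral>\<^sup>+\<omega>. indicator {\<omega>\<in>space M. W n \<omega> = w} \<omega> * of_nat (step n w \<omega>) \<partial>M)"
    unfolding wf_proc_Suc_step
    by (rule nn_integral_split_nat_value[where F="\<lambda>w \<omega>. of_nat (step n w \<omega>)"]) auto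
  also have "\<dots> = (\<Sum>w. emeasure M {\<omega>\<in>space M. W n \<omega> = w} * (\<integral>\<^sup>+\<omega>. of_nat (step n w \<omega>) \<partial>M))"
  proof (rule suminf_cong)
    fix w
    have "(\<lambda>\<omega>. of_nat (step n w \<omega>) :: ennreal) \<in> borel_measurable (fam_sigma (gen_idx n))"
      using step_measurable_gen by measurable
    then show "(\<integral>\<^sup>+\<omega>. indicator {\<omega>\<in>space M. W n \<omega> = w} \<omega> * of_nat (step n w \<omega>) \<partial>M) =
        emeasure M {\<omega>\<in>space M. W n \<omega> = w} * (\<integral>\<^sup>+\<omega>. of_nat (step n w \<omega>) \<partial>M)"
      by (rule nn_integral_indicator_mult_fam_sigma[OF past_gen_idx W_level_set_past])
  qed
  finally show ?thesis .
qed

lemma nn_integral_W: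
  "(\<integral>\<^sup>+\<omega>. of_nat (W n \<omega>) \<partial>M) = (\<Sum>w. emeasure M {\<omega>\<in>space M. W n \<omega> = w} * of_nat w)"
proof -
  have "(\<integral>\<^sup>+\<omega>. of_nat (W n \<omega>) \<partial>M) =
      (\<Sum>w. \<integral>\<^sup>+\<omega>. indicator {\<omega>\<in>space M. W n \<omega> = w} \<omega> * of_nat w \<partial>M)"
    by (rule nn_integral_split_nat_value[where F="\<lambda>w \<omega>. of_nat w"]) auto
  also have "\<dots> = (\<Sum>w. emeasure M {\<omega>\<in>space M. W n \<omega> = w} * of_nat w)"
    by (intro suminf_cong) (simp add: nn_integral_multc)
  finally show ?thesis .
qed

end

section \<open>Identically distributed arrays\<close>

lemma identical_distr_transfer:
  fixes g :: "'b \<Rightarrow> real" and h :: "'b \<Rightarrow> ennreal"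
  assumes Y: "Y \<in> measurable M N" and Z: "Z \<in> measurable M N"
    and eq: "distr M N Y = distr M N Z"
    and g: "g \<in> borel_measurable N" and h: "h \<in> borel_measurable N"
  shows "(\<integral>\<omega>. g (Y \<omega>) \<partial>M) = (\<integral>\<omega>. g (Z \<omega>) \<partial>M)"
    and "integrable M (\<lambda>\<omega>. g (Y \<omega>)) \<longleftrightarrow> integrable M (\<lambda>\<omega>. g (Z \<omega>))"
    and "(\<integral>\<^sup>+\<omega>. h (Y \<omega>) \<partial>M) = (\<integral>\<^sup>+\<omega>. h (Z \<omega>) \<partial>M)"
  using integral_distr[OF Y g] integral_distr[OF Z g]
    integrable_distr_eq[OF Y g] integrable_distr_eq[OF Z g]
    nn_integral_distr[OF Y, of h] nn_integral_distr[OF Z, of h] eq h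
  by simp_all

locale wf_iid = wf_model +
  assumes D_id: "\<And>n k. 1 \<le> k \<Longrightarrow>
      distr M (count_space UNIV) (D n k) = distr M (count_space UNIV) (D 0 1)"
    and X_id: "\<And>n k. 1 \<le> k \<Longrightarrow> distr M borel (X n k) = distr M borel (X 0 1)"
    and R_id: "\<And>n k. 1 \<le> k \<Longrightarrow> distr M borel (R n k) = distr M borel (R 0 1)"
    and D_int: "integrable M (\<lambda>\<omega>. real (D 0 1 \<omega>))"
    and X_int: "integrable M (X 0 1)"
    and R_int: "integrable M (R 0 1)"
    and D_sq: "integrable M (\<lambda>\<omega>. (real (D 0 1 \<omega>))\<^sup>2)"
    and X_sq: "integrable M (\<lambda>\<omega>. (X 0 1 \<omega>)\<^sup>2)"
    and R_sq: "integrable M (\<lambda>\<omega>. (R 0 1 \<omega>)\<^sup>2)"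
begin

lemmas D_transfer = identical_distr_transfer[OF D_meas D_meas D_id, where h="\<lambda>_. 0"]
lemmas X_transfer = identical_distr_transfer[OF X_meas X_meas X_id]
lemmas R_transfer = identical_distr_transfer[OF R_meas R_meas R_id, where h="\<lambda>_. 0"]

lemma D_integrable: "1 \<le> k \<Longrightarrow> integrable M (\<lambda>\<omega>. real (D n k \<omega>))"
  using D_transfer(2)[of k real n] D_int by simp

lemma R_integrable: "1 \<le> k \<Longrightarrow> integrable M (R n k)"
  using R_transfer(2)[of k "\<lambda>x. x" n] R_int by simp

lemma D_integral: "1 \<le> k \<Longrightarrow> (\<integral>\<omega>. real (D n k \<omega>) \<partial>M) = (\<integral>\<omega>. real (D 0 1 \<omega>) \<partial>M)"
  using D_transfer(1)[of k real n] by simp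

lemma R_integral: "1 \<le> k \<Longrightarrow> (\<integral>\<omega>. R n k \<omega> \<partial>M) = (\<integral>\<omega>. R 0 1 \<omega> \<partial>M)"
  using R_transfer(1)[of k "\<lambda>x. x" n] by simp

lemma nn_integral_offspring_sum:
  "(\<integral>\<^sup>+\<omega>. of_nat (\<Sum>j=1..w. D n j \<omega>) \<partial>M) = ennreal (real w * (\<integral>\<omega>. real (D 0 1 \<omega>) \<partial>M))"
proof -
  have "(\<integral>\<^sup>+\<omega>. of_nat (\<Sum>j=1..w. D n j \<omega>) \<partial>M) = (\<integral>\<^sup>+\<omega>. ennreal (\<Sum>j=1..w. real (D n j \<omega>)) \<partial>M)"
    by (simp add: ennreal_of_nat_eq_real_of_nat)
  also have "\<dots> = ennreal (\<integral>\<omega>. (\<Sum>j=1..w. real (D n j \<omega>)) \<partial>M)"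
    by (rule nn_integral_eq_integral) (auto intro!: D_integrable sum_nonneg)
  also have "(\<integral>\<omega>. (\<Sum>j=1..w. real (D n j \<omega>)) \<partial>M) = (\<Sum>j=1..w. (\<integral>\<omega>. real (D n j \<omega>) \<partial>M))"
    by (rule Bochner_Integration.integral_sum) (auto intro!: D_integrable)
  also have "\<dots> = (\<Sum>j=1..w. (\<integral>\<omega>. real (D 0 1 \<omega>) \<partial>M))"
    by (intro sum.cong refl D_integral) auto
  finally show ?thesis by simp
qed

lemma nn_integral_resource_sum:
  assumes "0 \<le> a"
  shows "(\<integral>\<^sup>+\<omega>. ennreal (a * (\<Sum>j=1..w. R n j \<omega>)) \<partial>M) = ennreal (a * (real w * (\<integral>\<omega>. R 0 1 \<omega> \<partial>M)))"
proof -
  have "(\<integral>\<^sup>+\<omega>. ennreal (a * (\<Sum>j=1..w. R n j \<omega>)) \<partial>M) = ennreal (\<integral>\<omega>. a * (\<Sum>j=1..w. R n j \<omega>) \<partial>M)"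
    using assms R_nonneg
    by (intro nn_integral_eq_integral AE_I2)
       (auto intro!: R_integrable sum_nonneg mult_nonneg_nonneg)
  also have "(\<integral>\<omega>. a * (\<Sum>j=1..w. R n j \<omega>) \<partial>M) = a * (\<Sum>j=1..w. (\<integral>\<omega>. R n j \<omega> \<partial>M))"
    by (subst Bochner_Integration.integral_sum[symmetric]) (auto intro!: R_integrable)
  also have "\<dots> = a * (\<Sum>j=1..w. (\<integral>\<omega>. R 0 1 \<omega> \<partial>M))"
    by (intro arg_cong[where f="\<lambda>x. a * x"] sum.cong refl R_integral) auto
  finally show ?thesis by simp
qed

lemma offspring_count_measurable:
  "(\<lambda>\<omega>. \<Sum>j=1..w. D n j \<omega>) \<in> measurable (fam_sigma (offspring_idx n)) (count_space UNIV)"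
proof (rule measurable_nat_if_real)
  have "(\<lambda>\<omega>. real (D n j \<omega>)) \<in> borel_measurable (fam_sigma (offspring_idx n))" if "1 \<le> j" for j
    using Fam_fam_sigma[of "Inl (n, j)"] that by (auto simp: offspring_idx_def Fam_simps)
  then show "(\<lambda>\<omega>. real (\<Sum>j=1..w. D n j \<omega>)) \<in> borel_measurable (fam_sigma (offspring_idx n))"
    unfolding of_nat_sum by (intro borel_measurable_sum) auto
qed

text \<open>The number of
  children is independent of each single weight.\<close>
lemma wald_identity:
  fixes h :: "real \<Rightarrow> real"
  assumes h: "h \<in> borel_measurable borel" "\<And>x. 0 \<le> h x"
  shows "(\<integral>\<^sup>+\<omega>. (\<Sum>i<(\<Sum>j=1..w. D n j \<omega>). ennreal (h (X n (Suc i) \<omega>))) \<partial>M) =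
    ennreal (real w * (\<integral>\<omega>. real (D 0 1 \<omega>) \<partial>M)) * (\<integral>\<^sup>+\<omega>. ennreal (h (X 0 1 \<omega>)) \<partial>M)"
proof -
  define d where "d = (\<lambda>\<omega>. \<Sum>j=1..w. D n j \<omega>)"
  define E where "E = (\<lambda>i. {\<omega>\<in>space M. Suc i \<le> d \<omega>})"
  let ?S = "fam_sigma (offspring_idx n)"
  let ?hX = "\<lambda>i \<omega>. ennreal (h (X n (Suc i) \<omega>))"
  have dS: "d \<in> measurable ?S (count_space UNIV)"
    unfolding d_def by (rule offspring_count_measurable)
  have dM: "d \<in> measurable M (count_space UNIV)" using measurable_from_subalg[OF subalgebra_fam_sigma dS] .
  have E_S: "E i \<in> sets ?S" for i
  proof -
    have "{\<omega>\<in>space ?S. Suc i \<le> d \<omega>} \<in> sets ?S" using dS by measurable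
    then show ?thesis unfolding E_def by simp
  qed
  have hX_S: "?hX i \<in> borel_measurable (fam_sigma {Inr (Inl (n, Suc i))})" for i
    using Fam_fam_sigma[of "Inr (Inl (n, Suc i))"] h(1) by (simp add: Fam_simps)
  have "(\<integral>\<^sup>+\<omega>. (\<Sum>i<d \<omega>. ?hX i \<omega>) \<partial>M) = (\<integral>\<^sup>+\<omega>. (\<Sum>i. indicator (E i) \<omega> * ?hX i \<omega>) \<partial>M)"
  proof (rule nn_integral_cong)
    fix \<omega> assume \<omega>: "\<omega> \<in> space M"
    have "(\<Sum>i. indicator (E i) \<omega> * ?hX i \<omega>) = (\<Sum>i<d \<omega>. indicator (E i) \<omega> * ?hX i \<omega>)"
      by (rule suminf_finite) (auto simp: indicator_def E_def)
    then show "(\<Sum>i<d \<omega>. ?hX i \<omega>) = (\<Sum>i. indicator (E i) \<omega> * ?hX i \<omega>)"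
      using \<omega> by (simp add: indicator_def E_def)
  qed
  also have "\<dots> = (\<Sum>i. \<integral>\<^sup>+\<omega>. indicator (E i) \<omega> * ?hX i \<omega> \<partial>M)"
  proof (rule nn_integral_suminf)
    fix i
    have "E i \<in> sets M" using E_S sets_fam_sigma_subset by blast
    then show "(\<lambda>\<omega>. indicator (E i) \<omega> * ?hX i \<omega>) \<in> borel_measurable M"
      using measurable_from_subalg[OF subalgebra_fam_sigma hX_S] by measurable
  qed
  also have "\<dots> = (\<Sum>i. emeasure M (E i) * (\<integral>\<^sup>+\<omega>. ennreal (h (X 0 1 \<omega>)) \<partial>M))"
  proof (rule suminf_cong)
    fix i
    have "offspring_idx n \<inter> {Inr (Inl (n, Suc i))} = {}" "offspring_idx n \<subseteq> wf_index"
        "{Inr (Inl (n, Suc i))} \<subseteq> wf_index"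
      by (auto simp: offspring_idx_def wf_index_def)
    from nn_integral_indicator_mult_fam_sigma[OF this E_S hX_S]
    show "(\<integral>\<^sup>+\<omega>. indicator (E i) \<omega> * ?hX i \<omega> \<partial>M) =
        emeasure M (E i) * (\<integral>\<^sup>+\<omega>. ennreal (h (X 0 1 \<omega>)) \<partial>M)"
      using X_transfer(3)[of "Suc i" "\<lambda>x. x" "\<lambda>x. ennreal (h x)" n] h(1) by simp
  qed
  also have "\<dots> = (\<integral>\<^sup>+\<omega>. of_nat (d \<omega>) \<partial>M) * (\<integral>\<^sup>+\<omega>. ennreal (h (X 0 1 \<omega>)) \<partial>M)"
    unfolding nn_integral_nat_tail_sum[OF dM] E_def by simp
  finally show ?thesis unfolding d_def nn_integral_offspring_sum .
qed

end

section \<open>The first-moment bound and certain extinction\<close>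

text \<open>The choice t = (m mu - r) / (m E X^2) makes the growth factor
  2 t r + m (1 - 2 t mu + t^2 E X^2) smaller than 1 under the hypotheses of part (ii);
  at this t the factor equals m - (m mu - r)^2 / (m E X^2).\<close>
lemma contraction_parameter:
  fixes m \<mu> r s2 :: real
  assumes m: "1 < m" and mu: "0 < \<mu>" and rle: "r \<le> m * \<mu> * (1 - sqrt (1 - 1 / m))"
    and v: "s2 - \<mu>\<^sup>2 < (m * \<mu> - r)\<^sup>2 / (m * (m - 1)) - \<mu>\<^sup>2" and s2: "0 < s2"
  defines "t \<equiv> (m * \<mu> - r) / (m * s2)"
  shows "0 < t" and "2 * t * r + m * (1 - 2 * t * \<mu> + t\<^sup>2 * s2) < 1"
proof -
  define A where "A = m * \<mu> - r"
  have "0 < sqrt (1 - 1 / m)" using m by (simp add: field_simps)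
  then have "m * \<mu> * (1 - sqrt (1 - 1 / m)) < m * \<mu>" using m mu by (simp add: algebra_simps)
  then have A0: "0 < A" unfolding A_def using rle by simp
  show "0 < t" unfolding t_def A_def[symmetric] using A0 m s2 by simp
  have e: "2 * t * r + m * (1 - 2 * t * \<mu> + t\<^sup>2 * s2) = m - A\<^sup>2 / (m * s2)"
    unfolding t_def A_def[symmetric] using m s2 by (simp add: field_simps power2_eq_square A_def)
  have "s2 * (m * (m - 1)) < A\<^sup>2" using v m unfolding A_def by (simp add: field_simps)
  then have "m - 1 < A\<^sup>2 / (m * s2)" using m s2 by (simp add: field_simps)
  then show "2 * t * r + m * (1 - 2 * t * \<mu> + t\<^sup>2 * s2) < 1" using e by simp
qed

context wf_iid
begin

text \<open>The expected number of survivors per individual is at most this factor.\<close>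
definition growth_factor :: "real \<Rightarrow> real" where
  "growth_factor t = 2 * t * (\<integral>\<omega>. R 0 1 \<omega> \<partial>M) +
     (\<integral>\<omega>. real (D 0 1 \<omega>) \<partial>M) * (\<integral>\<omega>. (1 - t * X 0 1 \<omega>)\<^sup>2 \<partial>M)"

lemma growth_factor_nonneg: "0 \<le> t \<Longrightarrow> 0 \<le> growth_factor t"
  unfolding growth_factor_def using R_nonneg
  by (intro add_nonneg_nonneg mult_nonneg_nonneg integral_nonneg_AE AE_I2) auto

lemma growth_factor_eq:
  "growth_factor t = 2 * t * (\<integral>\<omega>. R 0 1 \<omega> \<partial>M) + (\<integral>\<omega>. real (D 0 1 \<omega>) \<partial>M) *
     (1 - 2 * t * (\<integral>\<omega>. X 0 1 \<omega> \<partial>M) + t\<^sup>2 * (\<integral>\<omega>. (X 0 1 \<omega>)\<^sup>2 \<partial>M))"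
proof -
  have "(\<lambda>\<omega>. (1 - t * X 0 1 \<omega>)\<^sup>2) = (\<lambda>\<omega>. 1 + (- 2 * t) * X 0 1 \<omega> + t\<^sup>2 * (X 0 1 \<omega>)\<^sup>2)"
    by (auto simp: power2_eq_square algebra_simps)
  then show ?thesis unfolding growth_factor_def using X_int X_sq by (simp add: prob_space)
qed

lemma step_pointwise_bound:
  assumes \<omega>: "\<omega> \<in> space M" and a: "0 < a"
  shows "(of_nat (step n w \<omega>) :: ennreal) \<le> ennreal (a * (\<Sum>j=1..w. R n j \<omega>)) +
     (\<Sum>i<(\<Sum>j=1..w. D n j \<omega>). ennreal (max 0 (1 - a * X n (Suc i) \<omega>)))"
proof -
  define d where "d = (\<Sum>j=1..w. D n j \<omega>)"
  define s where "s = (\<Sum>j=1..w. R n j \<omega>)"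
  define xs where "xs = map (\<lambda>k. X n k \<omega>) [1..<d+1]"
  let ?h = "\<lambda>x. max 0 (1 - a * x)"
  have nn: "\<forall>x\<in>set xs. 0 \<le> x" unfolding xs_def using X_nonneg[OF \<omega>] by auto
  have s0: "0 \<le> s" unfolding s_def using R_nonneg[OF \<omega>] by (auto intro: sum_nonneg)
  have "sum_list (map ?h xs) = (\<Sum>k\<in>{Suc 0..<Suc d}. ?h (X n k \<omega>))"
    unfolding xs_def by (simp add: sum_set_upt_conv_sum_list_nat[symmetric] comp_def del: upt_Suc)
  also have "\<dots> = (\<Sum>i<d. ?h (X n (Suc i) \<omega>))"
    by (simp only: sum.shift_bounds_Suc_ivl atLeast0LessThan)
  finally have r: "real (step n w \<omega>) \<le> a * s + (\<Sum>i<d. ?h (X n (Suc i) \<omega>))"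
    using wf_count_upper[OF nn s0 a] unfolding wf_step_def d_def[symmetric] s_def[symmetric] xs_def
    by simp
  have "(of_nat (step n w \<omega>) :: ennreal) = ennreal (real (step n w \<omega>))"
    by (simp add: ennreal_of_nat_eq_real_of_nat)
  also have "\<dots> \<le> ennreal (a * s + (\<Sum>i<d. ?h (X n (Suc i) \<omega>)))"
    using r by (rule ennreal_leI)
  also have "\<dots> = ennreal (a * s) + (\<Sum>i<d. ennreal (?h (X n (Suc i) \<omega>)))"
  proof -
    have "ennreal (\<Sum>i<d. ?h (X n (Suc i) \<omega>)) = (\<Sum>i<d. ennreal (?h (X n (Suc i) \<omega>)))"
      by (rule sum_ennreal[symmetric]) simp
    moreover have "ennreal (a * s + (\<Sum>i<d. ?h (X n (Suc i) \<omega>))) =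
        ennreal (a * s) + ennreal (\<Sum>i<d. ?h (X n (Suc i) \<omega>))"
      using a s0 by (intro ennreal_plus) (auto intro: sum_nonneg)
    ultimately show ?thesis by simp
  qed
  finally show ?thesis unfolding d_def s_def .
qed

text \<open>The hinge max 0 (1 - 2 t x) lies below the square (1 - t x)^2.\<close>
lemma nn_integral_hinge_le:
  "(\<integral>\<^sup>+\<omega>. ennreal (max 0 (1 - (2 * t) * X 0 1 \<omega>)) \<partial>M) \<le> ennreal (\<integral>\<omega>. (1 - t * X 0 1 \<omega>)\<^sup>2 \<partial>M)"
proof -
  have "(\<integral>\<^sup>+\<omega>. ennreal (max 0 (1 - (2 * t) * X 0 1 \<omega>)) \<partial>M) \<le>
      (\<integral>\<^sup>+\<omega>. ennreal ((1 - t * X 0 1 \<omega>)\<^sup>2) \<partial>M)"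
  proof (intro nn_integral_mono ennreal_leI)
    fix \<omega>
    have "0 \<le> (t * X 0 1 \<omega>)\<^sup>2" by simp
    then have "1 - 2 * t * X 0 1 \<omega> \<le> (1 - t * X 0 1 \<omega>)\<^sup>2"
      by (simp add: power2_eq_square algebra_simps)
    then show "max 0 (1 - (2 * t) * X 0 1 \<omega>) \<le> (1 - t * X 0 1 \<omega>)\<^sup>2" by simp
  qed
  also have "\<dots> = ennreal (\<integral>\<omega>. (1 - t * X 0 1 \<omega>)\<^sup>2 \<partial>M)"
  proof -
    have "(\<lambda>\<omega>. (1 - t * X 0 1 \<omega>)\<^sup>2) = (\<lambda>\<omega>. 1 - 2 * t * X 0 1 \<omega> + t\<^sup>2 * (X 0 1 \<omega>)\<^sup>2)"
      by (auto simp: power2_eq_square algebra_simps)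
    then have "integrable M (\<lambda>\<omega>. (1 - t * X 0 1 \<omega>)\<^sup>2)" using X_int X_sq by auto
    then show ?thesis by (intro nn_integral_eq_integral AE_I2) auto
  qed
  finally show ?thesis .
qed

text \<open>Expected survivors from a generation of size w: integrate the pathwise bound
  using the resource means, Wald's identity and the hinge bound.\<close>
lemma step_expectation_bound:
  assumes t: "0 < t"
  shows "(\<integral>\<^sup>+\<omega>. of_nat (step n w \<omega>) \<partial>M) \<le> ennreal (real w * growth_factor t)"
proof -
  define mR where "mR = (\<integral>\<omega>. R 0 1 \<omega> \<partial>M)"
  define mD where "mD = (\<integral>\<omega>. real (D 0 1 \<omega>) \<partial>M)"
  define q where "q = (\<integral>\<omega>. (1 - t * X 0 1 \<omega>)\<^sup>2 \<partial>M)"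
  define h where "h = (\<lambda>x::real. max 0 (1 - (2 * t) * x))"
  have mR0: "0 \<le> mR" unfolding mR_def using R_nonneg by (intro integral_nonneg_AE AE_I2) auto
  have mD0: "0 \<le> mD" unfolding mD_def by (intro integral_nonneg_AE AE_I2) auto
  have q0: "0 \<le> q" unfolding q_def by (intro integral_nonneg_AE AE_I2) auto
  have hm: "h \<in> borel_measurable borel" unfolding h_def by measurable
  have hinge: "(\<integral>\<^sup>+\<omega>. ennreal (h (X 0 1 \<omega>)) \<partial>M) \<le> ennreal q"
    unfolding h_def q_def by (rule nn_integral_hinge_le)
  have Rm: "(\<lambda>\<omega>. ennreal (2 * t * (\<Sum>j=1..w. R n j \<omega>))) \<in> borel_measurable M"
    using R_meas by measurable
  have Hm: "(\<lambda>\<omega>. \<Sum>i<(\<Sum>j=1..w. D n j \<omega>). ennreal (h (X n (Suc i) \<omega>))) \<in> borel_measurable M"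
    by (rule measurable_compose_countable[where f="\<lambda>k \<omega>. \<Sum>i<k. ennreal (h (X n (Suc i) \<omega>))"])
       (use hm X_meas D_meas in measurable)
  have "(\<integral>\<^sup>+\<omega>. of_nat (step n w \<omega>) \<partial>M) \<le>
      (\<integral>\<^sup>+\<omega>. ennreal (2 * t * (\<Sum>j=1..w. R n j \<omega>)) +
        (\<Sum>i<(\<Sum>j=1..w. D n j \<omega>). ennreal (h (X n (Suc i) \<omega>))) \<partial>M)"
    unfolding h_def using t by (intro nn_integral_mono step_pointwise_bound) auto
  also have "\<dots> = (\<integral>\<^sup>+\<omega>. ennreal (2 * t * (\<Sum>j=1..w. R n j \<omega>)) \<partial>M) +
      (\<integral>\<^sup>+\<omega>. (\<Sum>i<(\<Sum>j=1..w. D n j \<omega>). ennreal (h (X n (Suc i) \<omega>))) \<partial>M)"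
    by (rule nn_integral_add[OF Rm Hm])
  also have "\<dots> = ennreal (2 * t * (real w * mR)) +
      ennreal (real w * mD) * (\<integral>\<^sup>+\<omega>. ennreal (h (X 0 1 \<omega>)) \<partial>M)"
    unfolding mR_def mD_def
    using nn_integral_resource_sum[of "2 * t"] wald_identity[OF hm] t h_def by simp
  also have "\<dots> \<le> ennreal (2 * t * (real w * mR)) + ennreal (real w * mD) * ennreal q"
    using hinge by (intro add_left_mono mult_left_mono) simp_all
  also have "\<dots> = ennreal (real w * (2 * t * mR + mD * q))"
  proof -
    have "ennreal (real w * mD) * ennreal q = ennreal (real w * mD * q)"
      using mD0 q0 by (intro ennreal_mult[symmetric]) auto
    moreover have "ennreal (2 * t * (real w * mR)) + ennreal (real w * mD * q) =
        ennreal (2 * t * (real w * mR) + real w * mD * q)"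
      using t mR0 mD0 q0 by (intro ennreal_plus[symmetric]) auto
    moreover have "2 * t * (real w * mR) + real w * mD * q = real w * (2 * t * mR + mD * q)"
      by (simp add: algebra_simps)
    ultimately show ?thesis by simp
  qed
  finally show ?thesis unfolding growth_factor_def mR_def mD_def q_def .
qed

lemma nn_integral_W_Suc_le:
  assumes t: "0 < t"
  shows "(\<integral>\<^sup>+\<omega>. of_nat (W (Suc n) \<omega>) \<partial>M) \<le> ennreal (growth_factor t) * (\<integral>\<^sup>+\<omega>. of_nat (W n \<omega>) \<partial>M)"
proof -
  have c0: "0 \<le> growth_factor t" using t by (simp add: growth_factor_nonneg)
  have "(\<integral>\<^sup>+\<omega>. of_nat (W (Suc n) \<omega>) \<partial>M) \<le>
      (\<Sum>w. emeasure M {\<omega>\<in>space M. W n \<omega> = w} * ennreal (real w * growth_factor t))"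
    unfolding nn_integral_W_Suc
    using step_expectation_bound[OF t] by (intro suminf_le mult_left_mono) auto
  also have "\<dots> = (\<Sum>w. ennreal (growth_factor t) * (emeasure M {\<omega>\<in>space M. W n \<omega> = w} * of_nat w))"
    using c0 by (intro suminf_cong) (simp add: ennreal_mult ennreal_of_nat_eq_real_of_nat ac_simps)
  also have "\<dots> = ennreal (growth_factor t) * (\<integral>\<^sup>+\<omega>. of_nat (W n \<omega>) \<partial>M)"
    by (simp add: nn_integral_W)
  finally show ?thesis .
qed

lemma nn_integral_W_le: "0 < t \<Longrightarrow> (\<integral>\<^sup>+\<omega>. of_nat (W n \<omega>) \<partial>M) \<le> ennreal (growth_factor t ^ n)"
proof (induction n)
  case 0 then show ?case by (simp add: emeasure_space_1)
next
  case (Suc n)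
  have "(\<integral>\<^sup>+\<omega>. of_nat (W (Suc n) \<omega>) \<partial>M) \<le> ennreal (growth_factor t) * ennreal (growth_factor t ^ n)"
    using nn_integral_W_Suc_le[OF Suc.prems, of n] Suc
    by (meson mult_left_mono order_trans zero_le)
  then show ?case using growth_factor_nonneg Suc.prems by (simp add: ennreal_mult[symmetric])
qed

text \<open>A growth factor below 1 forces extinction: P[W_n > 0] \<le> E W_n \<le> c^n \<rightarrow> 0.\<close>
lemma extinction_if_growth_factor_lt_1:
  assumes t: "0 < t" and c1: "growth_factor t < 1"
  shows "prob {\<omega>\<in>space M. (\<lambda>n. W n \<omega>) \<longlonglongrightarrow> 0} = 1"
proof -
  let ?c = "growth_factor t" and ?E = "{\<omega>\<in>space M. (\<lambda>n. W n \<omega>) \<longlonglongrightarrow> 0}"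
  have c0: "0 \<le> ?c" using t by (simp add: growth_factor_nonneg)
  have "1 - ?c ^ n \<le> prob ?E" for n
  proof -
    have "emeasure M {\<omega>\<in>space M. W n \<omega> \<noteq> 0} = (\<integral>\<^sup>+\<omega>. indicator {\<omega>\<in>space M. W n \<omega> \<noteq> 0} \<omega> \<partial>M)"
      by (subst nn_integral_indicator) measurable
    also have "\<dots> \<le> (\<integral>\<^sup>+\<omega>. of_nat (W n \<omega>) \<partial>M)"
      by (intro nn_integral_mono) (auto simp: indicator_def)
    finally have "emeasure M {\<omega>\<in>space M. W n \<omega> \<noteq> 0} \<le> (\<integral>\<^sup>+\<omega>. of_nat (W n \<omega>) \<partial>M)" .
    then have "ennreal (prob {\<omega>\<in>space M. W n \<omega> \<noteq> 0}) \<le> ennreal (?c ^ n)"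
      using nn_integral_W_le[OF t, of n] by (simp add: emeasure_eq_measure)
    then have "prob {\<omega>\<in>space M. W n \<omega> \<noteq> 0} \<le> ?c ^ n"
      using c0 by (simp add: ennreal_le_iff)
    moreover have "prob {\<omega>\<in>space M. W n \<omega> = 0} = 1 - prob {\<omega>\<in>space M. W n \<omega> \<noteq> 0}"
    proof -
      have "{\<omega>\<in>space M. W n \<omega> = 0} = space M - {\<omega>\<in>space M. W n \<omega> \<noteq> 0}" by auto
      moreover have "{\<omega>\<in>space M. W n \<omega> \<noteq> 0} \<in> events" by measurable
      ultimately show ?thesis by (simp add: prob_compl)
    qed
    moreover have "prob {\<omega>\<in>space M. W n \<omega> = 0} \<le> prob ?E"
      using extinction_event by (intro finite_measure_mono) auto
    ultimately show ?thesis by simp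
  qed
  moreover have "(\<lambda>n. 1 - ?c ^ n) \<longlonglongrightarrow> 1 - 0"
    using c0 c1 by (intro tendsto_diff tendsto_const LIMSEQ_power_zero) simp
  ultimately have "1 \<le> prob ?E"
    by (intro LIMSEQ_le_const2[where X="\<lambda>n. 1 - ?c ^ n"]) auto
  then show ?thesis using prob_le_1 by (simp add: antisym)
qed

theorem extinction_certain:
  defines "m \<equiv> \<integral>\<omega>. real (D 0 1 \<omega>) \<partial>M" and "\<mu> \<equiv> \<integral>\<omega>. X 0 1 \<omega> \<partial>M"
    and "r \<equiv> \<integral>\<omega>. R 0 1 \<omega> \<partial>M"
  assumes m1: "1 < m" and mu: "0 < \<mu>" and rle: "r \<le> m * \<mu> * (1 - sqrt (1 - 1 / m))"
    and var: "variance (X 0 1) < (m * \<mu> - r)\<^sup>2 / (m * (m - 1)) - \<mu>\<^sup>2"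
  shows "prob {\<omega>\<in>space M. (\<lambda>n. W n \<omega>) \<longlonglongrightarrow> 0} = 1"
proof -
  define s2 where "s2 = \<integral>\<omega>. (X 0 1 \<omega>)\<^sup>2 \<partial>M"
  have var_eq: "variance (X 0 1) = s2 - \<mu>\<^sup>2"
    unfolding s2_def \<mu>_def using variance_eq[OF X_int X_sq] by simp
  have "0 \<le> variance (X 0 1)" by (rule variance_positive)
  then have s2: "0 < s2" using var_eq mu by (smt (verit) zero_less_power)
  define t where "t = (m * \<mu> - r) / (m * s2)"
  note choice = contraction_parameter[OF m1 mu rle _ s2, folded t_def]
  show ?thesis
  proof (rule extinction_if_growth_factor_lt_1)
    show "0 < t" using choice var var_eq by simp
    show "growth_factor t < 1"
      using choice var var_eq unfolding growth_factor_eq m_def \<mu>_def r_def s2_def by simp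
  qed
qed

end

section \<open>Chebyshev bounds for sums along a generation\<close>

context wf_iid
begin

lemma integral_centered_product:
  assumes "i \<in> wf_index" "j \<in> wf_index" "i \<noteq> j"
    and "integrable M (Fam i)" "integrable M (Fam j)"
  shows "(\<integral>\<omega>. (Fam i \<omega> - c) * (Fam j \<omega> - c) \<partial>M) = (\<integral>\<omega>. Fam i \<omega> - c \<partial>M) * (\<integral>\<omega>. Fam j \<omega> - c \<partial>M)"
    and "integrable M (\<lambda>\<omega>. (Fam i \<omega> - c) * (Fam j \<omega> - c))"
proof -
  have "indep_vars (\<lambda>_. borel) (\<lambda>k \<omega>. Fam k \<omega> - c) wf_index"
    using indep_vars_compose2[OF indep, of "\<lambda>_ x. x - c" "\<lambda>_. borel"] by simp
  then have ind: "indep_vars (\<lambda>_. borel) (\<lambda>k \<omega>. Fam k \<omega> - c) {i, j}"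
    by (rule indep_vars_subset) (use assms in auto)
  have int: "\<And>k. k \<in> {i, j} \<Longrightarrow> integrable M (\<lambda>\<omega>. Fam k \<omega> - c)" using assms by auto
  show "(\<integral>\<omega>. (Fam i \<omega> - c) * (Fam j \<omega> - c) \<partial>M) = (\<integral>\<omega>. Fam i \<omega> - c \<partial>M) * (\<integral>\<omega>. Fam j \<omega> - c \<partial>M)"
    using indep_vars_lebesgue_integral[OF _ ind int] assms(3) by simp
  show "integrable M (\<lambda>\<omega>. (Fam i \<omega> - c) * (Fam j \<omega> - c))"
    using indep_vars_integrable[OF _ ind int] assms(3) by simp
qed

lemma second_moment_centered_sum:
  fixes \<iota> :: "nat \<Rightarrow> (nat \<times> nat) + (nat \<times> nat) + (nat \<times> nat)"
  assumes S: "finite S" and inj: "inj_on \<iota> S" and sub: "\<iota> ` S \<subseteq> wf_index"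
    and int: "\<And>j. j \<in> S \<Longrightarrow> integrable M (Fam (\<iota> j))"
    and sq: "\<And>j. j \<in> S \<Longrightarrow> integrable M (\<lambda>\<omega>. (Fam (\<iota> j) \<omega>)\<^sup>2)"
    and mean: "\<And>j. j \<in> S \<Longrightarrow> (\<integral>\<omega>. Fam (\<iota> j) \<omega> \<partial>M) = c"
    and var: "\<And>j. j \<in> S \<Longrightarrow> (\<integral>\<omega>. (Fam (\<iota> j) \<omega> - c)\<^sup>2 \<partial>M) = V"
  defines "f \<equiv> \<lambda>\<omega>. \<Sum>j\<in>S. (Fam (\<iota> j) \<omega> - c)"
  shows "integrable M (\<lambda>\<omega>. (f \<omega>)\<^sup>2)" and "(\<integral>\<omega>. (f \<omega>)\<^sup>2 \<partial>M) = real (card S) * V"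
proof -
  define Z where "Z = (\<lambda>j \<omega>. Fam (\<iota> j) \<omega> - c)"
  have Z0: "(\<integral>\<omega>. Z j \<omega> \<partial>M) = 0" if "j \<in> S" for j
    unfolding Z_def using int mean that by (simp add: prob_space)
  have prod: "integrable M (\<lambda>\<omega>. Z i \<omega> * Z j \<omega>) \<and>
      (\<integral>\<omega>. Z i \<omega> * Z j \<omega> \<partial>M) = (if i = j then V else 0)" if i: "i \<in> S" and j: "j \<in> S" for i j
  proof (cases "i = j")
    case True
    have "(\<lambda>\<omega>. Z j \<omega> * Z j \<omega>) = (\<lambda>\<omega>. (Fam (\<iota> j) \<omega>)\<^sup>2 + (- 2 * c) * Fam (\<iota> j) \<omega> + c\<^sup>2)"
      unfolding Z_def by (auto simp: power2_eq_square algebra_simps)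
    then have "integrable M (\<lambda>\<omega>. Z j \<omega> * Z j \<omega>)" using int[OF j] sq[OF j] by auto
    then show ?thesis using True var[OF j] unfolding Z_def by (simp add: power2_eq_square)
  next
    case False
    then have "\<iota> i \<noteq> \<iota> j" using inj i j by (auto dest: inj_onD)
    then show ?thesis
      using integral_centered_product[of "\<iota> i" "\<iota> j" c] sub i j int Z0[OF i] Z0[OF j] False
      unfolding Z_def by auto
  qed
  have f2: "(\<lambda>\<omega>. (f \<omega>)\<^sup>2) = (\<lambda>\<omega>. \<Sum>i\<in>S. \<Sum>j\<in>S. Z i \<omega> * Z j \<omega>)"
    unfolding f_def Z_def by (auto simp: power2_eq_square sum_product)
  show "integrable M (\<lambda>\<omega>. (f \<omega>)\<^sup>2)"
    unfolding f2 using prod by (intro Bochner_Integration.integrable_sum) auto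
  have "(\<integral>\<omega>. (f \<omega>)\<^sup>2 \<partial>M) = (\<Sum>i\<in>S. \<Sum>j\<in>S. (\<integral>\<omega>. Z i \<omega> * Z j \<omega> \<partial>M))"
    unfolding f2 using prod
    by (subst Bochner_Integration.integral_sum, auto intro!: Bochner_Integration.integrable_sum
        simp: Bochner_Integration.integral_sum)
  also have "\<dots> = (\<Sum>i\<in>S. \<Sum>j\<in>S. (if i = j then V else 0))"
    using prod by (intro sum.cong refl) auto
  finally show "(\<integral>\<omega>. (f \<omega>)\<^sup>2 \<partial>M) = real (card S) * V" using S by simp
qed

lemma chebyshev_family_sum:
  fixes \<iota> :: "nat \<Rightarrow> (nat \<times> nat) + (nat \<times> nat) + (nat \<times> nat)"
  assumes S: "finite S" and inj: "inj_on \<iota> S" and sub: "\<iota> ` S \<subseteq> wf_index"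
    and int: "\<And>j. j \<in> S \<Longrightarrow> integrable M (Fam (\<iota> j))"
    and sq: "\<And>j. j \<in> S \<Longrightarrow> integrable M (\<lambda>\<omega>. (Fam (\<iota> j) \<omega>)\<^sup>2)"
    and mean: "\<And>j. j \<in> S \<Longrightarrow> (\<integral>\<omega>. Fam (\<iota> j) \<omega> \<partial>M) = c"
    and var: "\<And>j. j \<in> S \<Longrightarrow> (\<integral>\<omega>. (Fam (\<iota> j) \<omega> - c)\<^sup>2 \<partial>M) = V"
    and eps: "0 < \<epsilon>"
  shows "prob {\<omega>\<in>space M. \<epsilon> \<le> \<bar>(\<Sum>j\<in>S. Fam (\<iota> j) \<omega>) - real (card S) * c\<bar>} \<le> real (card S) * V / \<epsilon>\<^sup>2"
proof -
  define f where "f = (\<lambda>\<omega>. \<Sum>j\<in>S. (Fam (\<iota> j) \<omega> - c))"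
  note moment = second_moment_centered_sum[OF S inj sub int sq mean var]
  have fe: "f \<omega> = (\<Sum>j\<in>S. Fam (\<iota> j) \<omega>) - real (card S) * c" for \<omega>
    unfolding f_def by (simp add: sum_subtractf)
  have fint: "integrable M f" unfolding f_def using int by auto
  have fm: "expectation f = 0"
    unfolding f_def using int mean by (simp add: Bochner_Integration.integral_sum prob_space)
  have "integrable M (\<lambda>\<omega>. (f \<omega>)\<^sup>2)" and var_f: "variance f = real (card S) * V"
    using moment fm unfolding f_def by simp_all
  then have "prob {\<omega>\<in>space M. \<bar>f \<omega> - expectation f\<bar> \<ge> \<epsilon>} \<le> variance f / \<epsilon>\<^sup>2"
    using fint eps by (intro Chebyshev_inequality) auto
  then show ?thesis using fm var_f unfolding fe by simp
qed

lemma deviation_bound_D: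
  assumes "0 < \<delta>" "0 < v"
  shows "prob {\<omega>\<in>space M. \<delta> * real v \<le> \<bar>(\<Sum>j=1..v. real (D n j \<omega>)) - real v * (\<integral>\<omega>. real (D 0 1 \<omega>) \<partial>M)\<bar>}
      \<le> (\<integral>\<omega>. (real (D 0 1 \<omega>) - (\<integral>\<omega>. real (D 0 1 \<omega>) \<partial>M))\<^sup>2 \<partial>M) / \<delta>\<^sup>2 / real v"
proof -
  have eps: "0 < \<delta> * real v" using assms by simp
  have scale: "real (card {1..v}) * V / (\<delta> * real v)\<^sup>2 = V / \<delta>\<^sup>2 / real v" for V
    using assms by (simp add: power_mult_distrib power2_eq_square)
  let ?mD = "\<integral>\<omega>. real (D 0 1 \<omega>) \<partial>M"
  have "prob {\<omega>\<in>space M. \<delta> * real v \<le> \<bar>(\<Sum>j\<in>{1..v}. Fam (Inl (n, j)) \<omega>) - real (card {1..v}) * ?mD\<bar>}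
    \<le> real (card {1..v}) * (\<integral>\<omega>. (real (D 0 1 \<omega>) - ?mD)\<^sup>2 \<partial>M) / (\<delta> * real v)\<^sup>2"
  proof (rule chebyshev_family_sum)
    fix j assume "j \<in> {1..v}"
    then have j1: "1 \<le> j" by simp
    show "integrable M (Fam (Inl (n, j)))" using D_integrable[OF j1] by (simp add: Fam_simps)
    show "integrable M (\<lambda>\<omega>. (Fam (Inl (n, j)) \<omega>)\<^sup>2)"
      using D_transfer(2)[OF j1, of "\<lambda>x. (real x)\<^sup>2" n] D_sq by (simp add: Fam_simps)
    show "(\<integral>\<omega>. Fam (Inl (n, j)) \<omega> \<partial>M) = ?mD" using D_integral[OF j1] by (simp add: Fam_simps)
    show "(\<integral>\<omega>. (Fam (Inl (n, j)) \<omega> - ?mD)\<^sup>2 \<partial>M) = (\<integral>\<omega>. (real (D 0 1 \<omega>) - ?mD)\<^sup>2 \<partial>M)"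
      using D_transfer(1)[OF j1, of "\<lambda>x. (real x - ?mD)\<^sup>2" n] by (simp add: Fam_simps)
  qed (use eps in \<open>auto simp: inj_on_def wf_index_def\<close>)
  then show ?thesis unfolding scale by (simp add: Fam_simps)
qed

lemma deviation_bound_R:
  assumes "0 < \<delta>" "0 < v"
  shows "prob {\<omega>\<in>space M. \<delta> * real v \<le> \<bar>(\<Sum>j=1..v. R n j \<omega>) - real v * (\<integral>\<omega>. R 0 1 \<omega> \<partial>M)\<bar>}
      \<le> (\<integral>\<omega>. (R 0 1 \<omega> - (\<integral>\<omega>. R 0 1 \<omega> \<partial>M))\<^sup>2 \<partial>M) / \<delta>\<^sup>2 / real v"
proof -
  have eps: "0 < \<delta> * real v" using assms by simp
  have scale: "real (card {1..v}) * V / (\<delta> * real v)\<^sup>2 = V / \<delta>\<^sup>2 / real v" for V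
    using assms by (simp add: power_mult_distrib power2_eq_square)
  let ?mR = "\<integral>\<omega>. R 0 1 \<omega> \<partial>M"
  have "prob {\<omega>\<in>space M. \<delta> * real v \<le> \<bar>(\<Sum>j\<in>{1..v}. Fam (Inr (Inr (n, j))) \<omega>) - real (card {1..v}) * ?mR\<bar>}
    \<le> real (card {1..v}) * (\<integral>\<omega>. (R 0 1 \<omega> - ?mR)\<^sup>2 \<partial>M) / (\<delta> * real v)\<^sup>2"
  proof (rule chebyshev_family_sum)
    fix j assume "j \<in> {1..v}"
    then have j1: "1 \<le> j" by simp
    show "integrable M (Fam (Inr (Inr (n, j))))" using R_integrable[OF j1] by (simp add: Fam_simps)
    show "integrable M (\<lambda>\<omega>. (Fam (Inr (Inr (n, j))) \<omega>)\<^sup>2)"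
      using R_transfer(2)[OF j1, of "\<lambda>x. x\<^sup>2" n] R_sq by (simp add: Fam_simps)
    show "(\<integral>\<omega>. Fam (Inr (Inr (n, j))) \<omega> \<partial>M) = ?mR" using R_integral[OF j1] by (simp add: Fam_simps)
    show "(\<integral>\<omega>. (Fam (Inr (Inr (n, j))) \<omega> - ?mR)\<^sup>2 \<partial>M) = (\<integral>\<omega>. (R 0 1 \<omega> - ?mR)\<^sup>2 \<partial>M)"
      using R_transfer(1)[OF j1, of "\<lambda>x. (x - ?mR)\<^sup>2" n] by (simp add: Fam_simps)
  qed (use eps in \<open>auto simp: inj_on_def wf_index_def\<close>)
  then show ?thesis unfolding scale by (simp add: Fam_simps)
qed

lemma deviation_bound_X:
  assumes "0 < \<delta>" "0 < v"
  shows "prob {\<omega>\<in>space M. \<delta> * real v \<le> \<bar>(\<Sum>j=1..v. X n j \<omega>) - real v * (\<integral>\<omega>. X 0 1 \<omega> \<partial>M)\<bar>}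
      \<le> (\<integral>\<omega>. (X 0 1 \<omega> - (\<integral>\<omega>. X 0 1 \<omega> \<partial>M))\<^sup>2 \<partial>M) / \<delta>\<^sup>2 / real v"
proof -
  have eps: "0 < \<delta> * real v" using assms by simp
  have scale: "real (card {1..v}) * V / (\<delta> * real v)\<^sup>2 = V / \<delta>\<^sup>2 / real v" for V
    using assms by (simp add: power_mult_distrib power2_eq_square)
  let ?mX = "\<integral>\<omega>. X 0 1 \<omega> \<partial>M"
  have "prob {\<omega>\<in>space M. \<delta> * real v \<le> \<bar>(\<Sum>j\<in>{1..v}. Fam (Inr (Inl (n, j))) \<omega>) - real (card {1..v}) * ?mX\<bar>}
    \<le> real (card {1..v}) * (\<integral>\<omega>. (X 0 1 \<omega> - ?mX)\<^sup>2 \<partial>M) / (\<delta> * real v)\<^sup>2"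
  proof (rule chebyshev_family_sum)
    fix j assume "j \<in> {1..v}"
    then have j1: "1 \<le> j" by simp
    show "integrable M (Fam (Inr (Inl (n, j))))"
      using X_transfer(2)[OF j1, of "\<lambda>x. x" "\<lambda>_. 0" n] X_int by (simp add: Fam_simps)
    show "integrable M (\<lambda>\<omega>. (Fam (Inr (Inl (n, j))) \<omega>)\<^sup>2)"
      using X_transfer(2)[OF j1, of "\<lambda>x. x\<^sup>2" "\<lambda>_. 0" n] X_sq by (simp add: Fam_simps)
    show "(\<integral>\<omega>. Fam (Inr (Inl (n, j))) \<omega> \<partial>M) = ?mX"
      using X_transfer(1)[OF j1, of "\<lambda>x. x" "\<lambda>_. 0" n] by (simp add: Fam_simps)
    show "(\<integral>\<omega>. (Fam (Inr (Inl (n, j))) \<omega> - ?mX)\<^sup>2 \<partial>M) = (\<integral>\<omega>. (X 0 1 \<omega> - ?mX)\<^sup>2 \<partial>M)"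
      using X_transfer(1)[OF j1, of "\<lambda>x. (x - ?mX)\<^sup>2" "\<lambda>_. 0" n] by (simp add: Fam_simps)
  qed (use eps in \<open>auto simp: inj_on_def wf_index_def\<close>)
  then show ?thesis unfolding scale by (simp add: Fam_simps)
qed

end

section \<open>Survival with positive probability when \<mu> < r\<close>

text \<open>Strictly between 1 and the offspring mean m
  lies m1, and strictly between 1 and the ratio r / \<mu> lies r1 / \<mu>1 (with
  \<mu> < \<mu>1 < r1 < r).  A typical large generation of size v has about m1 v children whose
  r1 v worth of resources admit r1 v / \<mu>1 of them, so it grows by the factor
  \<rho> = min m1 (r1 / \<mu>1) > 1; \<rho>' is a margin below \<rho>.  Generations of size at least V0
  fail to grow by \<rho>' with probability at most Cst / size.\<close>
locale wf_growth = wf_iid +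
  assumes m_gt1: "1 < (\<integral>\<omega>. real (D 0 1 \<omega>) \<partial>M)"
    and mu_pos: "0 < (\<integral>\<omega>. X 0 1 \<omega> \<partial>M)"
    and mu_lt_r: "(\<integral>\<omega>. X 0 1 \<omega> \<partial>M) < (\<integral>\<omega>. R 0 1 \<omega> \<partial>M)"
begin

definition mD :: real where "mD = (\<integral>\<omega>. real (D 0 1 \<omega>) \<partial>M)"
definition mR :: real where "mR = (\<integral>\<omega>. R 0 1 \<omega> \<partial>M)"
definition mX :: real where "mX = (\<integral>\<omega>. X 0 1 \<omega> \<partial>M)"
definition VD :: real where "VD = (\<integral>\<omega>. (real (D 0 1 \<omega>) - mD)\<^sup>2 \<partial>M)"
definition VR :: real where "VR = (\<integral>\<omega>. (R 0 1 \<omega> - mR)\<^sup>2 \<partial>M)"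
definition VX :: real where "VX = (\<integral>\<omega>. (X 0 1 \<omega> - mX)\<^sup>2 \<partial>M)"
definition m1 :: real where "m1 = (1 + mD) / 2"
definition \<mu>1 :: real where "\<mu>1 = (2 * mX + mR) / 3"
definition r1 :: real where "r1 = (mX + 2 * mR) / 3"
definition \<rho> :: real where "\<rho> = min m1 (r1 / \<mu>1)"
definition \<rho>' :: real where "\<rho>' = (1 + \<rho>) / 2"
definition V0 :: real where "V0 = max 1 (2 / (\<rho> - 1))"
definition Cst :: real where "Cst = VD / (mD - m1)\<^sup>2 + VR / (mR - r1)\<^sup>2 + VX / (\<mu>1 - mX)\<^sup>2"

lemma constants:
  shows "1 < m1" "m1 < mD" "0 < mX" "mX < \<mu>1" "\<mu>1 < r1" "r1 < mR" "1 < \<rho>" "\<rho> \<le> m1"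
    "\<rho> \<le> r1 / \<mu>1" "1 < \<rho>'" "\<rho>' < \<rho>" "1 \<le> V0" "2 / (\<rho> - 1) \<le> V0" "0 \<le> Cst"
proof -
  have a: "1 < mD" "0 < mX" "mX < mR" using m_gt1 mu_pos mu_lt_r by (auto simp: mD_def mX_def mR_def)
  show "1 < m1" "m1 < mD" using a by (auto simp: m1_def)
  show "0 < mX" "mX < \<mu>1" "\<mu>1 < r1" "r1 < mR" using a by (auto simp: \<mu>1_def r1_def)
  have "1 < r1 / \<mu>1" using a by (auto simp: \<mu>1_def r1_def field_simps)
  then show r: "1 < \<rho>" using a by (auto simp: \<rho>_def m1_def)
  show "\<rho> \<le> m1" "\<rho> \<le> r1 / \<mu>1" by (auto simp: \<rho>_def)
  show "1 < \<rho>'" "\<rho>' < \<rho>" using r by (auto simp: \<rho>'_def)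
  show "1 \<le> V0" "2 / (\<rho> - 1) \<le> V0" by (auto simp: V0_def)
  have "0 \<le> VD" "0 \<le> VR" "0 \<le> VX" unfolding VD_def VR_def VX_def
    by (auto intro!: integral_nonneg_AE AE_I2)
  then show "0 \<le> Cst" unfolding Cst_def by auto
qed

lemma window_and_target:
  assumes v: "V0 \<le> real v"
  obtains L k :: nat where "real L < m1 * real v + 1" "real v \<le> real L" "1 \<le> k" "k \<le> L"
    "\<rho>' * real v \<le> real k" "real k * \<mu>1 \<le> r1 * real v"
proof -
  note c = constants
  have v1: "1 \<le> real v" using v c by linarith
  define L where "L = nat \<lceil>m1 * real v\<rceil>"
  have "real L = real_of_int \<lceil>m1 * real v\<rceil>" unfolding L_def using c(1) v1 by simp
  then have L: "m1 * real v \<le> real L" "real L < m1 * real v + 1" by linarith+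
  have Lv: "real v \<le> real L" using L(1) c(1) v1 by (smt (verit) mult_le_cancel_right1)
  define K where "K = nat \<lfloor>r1 * real v / \<mu>1\<rfloor>"
  have mu1: "0 < \<mu>1" using c by linarith
  have K0: "0 \<le> r1 * real v / \<mu>1" using mu1 c by simp
  have K: "r1 * real v / \<mu>1 - 1 < real K" "real K \<le> r1 * real v / \<mu>1"
    unfolding K_def using K0 by linarith+
  define k where "k = min L K"
  have "\<rho> * real v \<le> r1 * real v / \<mu>1" using mult_right_mono[OF c(9), of "real v"] by simp
  moreover have "\<rho>' * real v + 1 \<le> \<rho> * real v"
  proof -
    have "2 / (\<rho> - 1) \<le> real v" using v c by linarith
    then have "2 \<le> (\<rho> - 1) * real v" using c by (simp add: field_simps)
    then show ?thesis unfolding \<rho>'_def by (simp add: algebra_simps field_simps)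
  qed
  moreover have "\<rho>' * real v \<le> m1 * real v" using c v1 by (simp add: mult_right_mono)
  ultimately have kge: "\<rho>' * real v \<le> real k" using K L unfolding k_def by linarith
  have "1 < \<rho>' * real v" using c v1 by (smt (verit) mult_le_cancel_left1)
  then have "1 \<le> k" using kge by linarith
  moreover have "real k * \<mu>1 \<le> r1 * real v"
  proof -
    have "real k \<le> r1 * real v / \<mu>1" using K(2) unfolding k_def by auto
    then show ?thesis using mu1 by (simp add: field_simps)
  qed
  moreover have "k \<le> L" unfolding k_def by simp
  ultimately show ?thesis using that[of L k] L(2) Lv kge by simp
qed

lemma step_ge_if_typical:
  assumes \<omega>: "\<omega> \<in> space M"
    and L: "real L < m1 * real v + 1" and k: "1 \<le> k" "k \<le> L" "real k * \<mu>1 \<le> r1 * real v"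
    and dD: "\<bar>(\<Sum>j=1..v. real (D n j \<omega>)) - real v * mD\<bar> < (mD - m1) * real v"
    and dR: "\<bar>(\<Sum>j=1..v. R n j \<omega>) - real v * mR\<bar> < (mR - r1) * real v"
    and dX: "\<bar>(\<Sum>j=1..L. X n j \<omega>) - real L * mX\<bar> < (\<mu>1 - mX) * real L"
  shows "k \<le> step n v \<omega>"
proof -
  define d where "d = (\<Sum>j=1..v. D n j \<omega>)"
  define xs where "xs = map (\<lambda>k. X n k \<omega>) [1..<d+1]"
  have "(\<Sum>j=1..v. real (D n j \<omega>)) > m1 * real v" using dD by (simp add: algebra_simps abs_if split: if_splits)
  then have Ld: "L \<le> d" using L unfolding d_def by (simp del: of_nat_sum add: of_nat_sum[symmetric])
  have "sum_list (take L xs) = (\<Sum>i=1..L. X n i \<omega>)"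
  proof -
    have "take L xs = map (\<lambda>k. X n k \<omega>) [1..<L+1]"
      unfolding xs_def using Ld by (simp add: take_map del: upt_Suc)
    then show ?thesis
      by (simp add: sum_set_upt_conv_sum_list_nat[symmetric] atLeastLessThanSuc_atLeastAtMost
          del: upt_Suc)
  qed
  moreover have "real k * (\<Sum>i=1..L. X n i \<omega>) \<le> real L * (\<Sum>j=1..v. R n j \<omega>)"
  proof -
    have sX: "(\<Sum>i=1..L. X n i \<omega>) \<le> \<mu>1 * real L"
      using dX by (simp add: algebra_simps abs_if split: if_splits)
    have sR: "r1 * real v \<le> (\<Sum>j=1..v. R n j \<omega>)"
      using dR by (simp add: algebra_simps abs_if split: if_splits)
    have "real k * (\<Sum>i=1..L. X n i \<omega>) \<le> (real k * \<mu>1) * real L"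
      using mult_left_mono[OF sX, of "real k"] by simp
    also have "\<dots> \<le> (r1 * real v) * real L" using k(3) by (intro mult_right_mono) auto
    also have "\<dots> \<le> (\<Sum>j=1..v. R n j \<omega>) * real L" using sR by (intro mult_right_mono) auto
    finally show ?thesis by (simp add: ac_simps)
  qed
  moreover have "\<forall>x\<in>set xs. 0 \<le> x" unfolding xs_def using X_nonneg[OF \<omega>] by auto
  moreover have "length xs = d" unfolding xs_def by simp
  ultimately have "k \<le> wf_count xs (\<Sum>j=1..v. R n j \<omega>)"
    using wf_count_lower[OF _ k(1,2)] Ld by simp
  then show ?thesis unfolding wf_step_def d_def[symmetric] xs_def[symmetric] .
qed

lemma growth_failure_bound:
  assumes v: "V0 \<le> real v"
  shows "prob {\<omega>\<in>space M. real (step n v \<omega>) < \<rho>' * real v} \<le> Cst / real v"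
proof -
  note c = constants
  have v1: "1 \<le> real v" using v c by linarith
  obtain L k :: nat where L: "real L < m1 * real v + 1" "real v \<le> real L"
      and k: "1 \<le> k" "k \<le> L" "\<rho>' * real v \<le> real k" "real k * \<mu>1 \<le> r1 * real v"
    using window_and_target[OF v] by blast
  define B1 where "B1 = {\<omega>\<in>space M. (mD - m1) * real v \<le> \<bar>(\<Sum>j=1..v. real (D n j \<omega>)) - real v * mD\<bar>}"
  define B2 where "B2 = {\<omega>\<in>space M. (mR - r1) * real v \<le> \<bar>(\<Sum>j=1..v. R n j \<omega>) - real v * mR\<bar>}"
  define B3 where "B3 = {\<omega>\<in>space M. (\<mu>1 - mX) * real L \<le> \<bar>(\<Sum>j=1..L. X n j \<omega>) - real L * mX\<bar>}"
  have sub: "{\<omega>\<in>space M. real (step n v \<omega>) < \<rho>' * real v} \<subseteq> B1 \<union> B2 \<union> B3"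
  proof
    fix \<omega> assume a: "\<omega> \<in> {\<omega>\<in>space M. real (step n v \<omega>) < \<rho>' * real v}"
    show "\<omega> \<in> B1 \<union> B2 \<union> B3"
    proof (rule ccontr)
      assume "\<omega> \<notin> B1 \<union> B2 \<union> B3"
      with a have "k \<le> step n v \<omega>"
        by (intro step_ge_if_typical[OF _ L(1) k(1,2,4)]) (auto simp: B1_def B2_def B3_def)
      then show False using a k(3) by simp
    qed
  qed
  note D_meas[measurable] X_meas[measurable] R_meas[measurable]
  have mB: "B1 \<in> events" "B2 \<in> events" "B3 \<in> events" unfolding B1_def B2_def B3_def by measurable
  have "prob {\<omega>\<in>space M. real (step n v \<omega>) < \<rho>' * real v} \<le> prob (B1 \<union> B2 \<union> B3)"
    using sub mB by (intro finite_measure_mono) auto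
  also have "\<dots> \<le> prob B1 + prob B2 + prob B3"
  proof -
    have "prob (B1 \<union> B2 \<union> B3) \<le> prob (B1 \<union> B2) + prob B3" using mB by (intro measure_Un_le) auto
    moreover have "prob (B1 \<union> B2) \<le> prob B1 + prob B2" using mB by (intro measure_Un_le) auto
    ultimately show ?thesis by simp
  qed
  also have "\<dots> \<le> VD / (mD - m1)\<^sup>2 / real v + VR / (mR - r1)\<^sup>2 / real v + VX / (\<mu>1 - mX)\<^sup>2 / real v"
  proof (intro add_mono)
    show "prob B1 \<le> VD / (mD - m1)\<^sup>2 / real v"
      using deviation_bound_D[of "mD - m1" v n] c v1 unfolding B1_def VD_def mD_def by simp
    show "prob B2 \<le> VR / (mR - r1)\<^sup>2 / real v"
      using deviation_bound_R[of "mR - r1" v n] c v1 unfolding B2_def VR_def mR_def by simp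
    have "prob B3 \<le> VX / (\<mu>1 - mX)\<^sup>2 / real L"
      using deviation_bound_X[of "\<mu>1 - mX" L n] c v1 L(2) unfolding B3_def VX_def mX_def by simp
    also have "\<dots> \<le> VX / (\<mu>1 - mX)\<^sup>2 / real v"
      using c v1 L(2) unfolding VX_def by (intro divide_left_mono integral_nonneg_AE) auto
    finally show "prob B3 \<le> VX / (\<mu>1 - mX)\<^sup>2 / real v" .
  qed
  finally show ?thesis unfolding Cst_def by (simp add: add_divide_distrib)
qed

end

context wf_growth
begin

definition growth_path :: "nat \<Rightarrow> nat \<Rightarrow> nat \<Rightarrow> 'a set" where
  "growth_path n0 w0 k = {\<omega>\<in>space M. W n0 \<omega> = w0 \<and>
     (\<forall>i<k. \<rho>' * real (W (n0 + i) \<omega>) \<le> real (W (Suc (n0 + i)) \<omega>))}"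

definition growth_break :: "nat \<Rightarrow> nat \<Rightarrow> nat \<Rightarrow> 'a set" where
  "growth_break n0 w0 k = growth_path n0 w0 k \<inter>
     {\<omega>. real (W (Suc (n0 + k)) \<omega>) < \<rho>' * real (W (n0 + k) \<omega>)}"

lemma growth_path_size: "\<omega> \<in> growth_path n0 w0 k \<Longrightarrow> \<rho>' ^ k * real w0 \<le> real (W (n0 + k) \<omega>)"
proof (induction k)
  case 0 then show ?case by (simp add: growth_path_def)
next
  case (Suc k)
  then have "\<rho>' ^ k * real w0 \<le> real (W (n0 + k) \<omega>)"
    and "\<rho>' * real (W (n0 + k) \<omega>) \<le> real (W (Suc (n0 + k)) \<omega>)"
    by (auto simp: growth_path_def)
  moreover have "0 \<le> \<rho>'" using constants(10) by simp
  ultimately have "\<rho>' * (\<rho>' ^ k * real w0) \<le> real (W (Suc (n0 + k)) \<omega>)"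
    by (meson mult_left_mono order_trans)
  then show ?case by simp
qed

lemma growth_path_antimono: "k \<le> j \<Longrightarrow> growth_path n0 w0 j \<subseteq> growth_path n0 w0 k"
  by (auto simp: growth_path_def)

lemma growth_path_past: "growth_path n0 w0 k \<in> sets (fam_sigma (past_idx (n0 + k)))"
proof -
  let ?N = "fam_sigma (past_idx (n0 + k))"
  have Wm: "(\<lambda>\<omega>. real (W m \<omega>)) \<in> borel_measurable ?N" if "m \<le> n0 + k" for m
    using W_measurable_past[OF that] by measurable
  have "Measurable.pred ?N (\<lambda>\<omega>. W n0 \<omega> = w0 \<and>
      (\<forall>i\<in>{..<k}. \<rho>' * real (W (n0 + i) \<omega>) \<le> real (W (Suc (n0 + i)) \<omega>)))"
  proof (intro pred_intros_logic pred_intros_finite)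
    show "Measurable.pred ?N (\<lambda>\<omega>. W n0 \<omega> = w0)" using W_measurable_past[of n0 "n0 + k"] by measurable
    fix i assume "i \<in> {..<k}"
    then have "n0 + i \<le> n0 + k" "Suc (n0 + i) \<le> n0 + k" by auto
    then show "Measurable.pred ?N (\<lambda>\<omega>. \<rho>' * real (W (n0 + i) \<omega>) \<le> real (W (Suc (n0 + i)) \<omega>))"
      using Wm by measurable
  qed simp
  then show ?thesis unfolding growth_path_def pred_def by (simp add: lessThan_def)
qed

lemma growth_path_events: "growth_path n0 w0 k \<in> events"
  using growth_path_past sets_fam_sigma_subset by blast

lemma growth_break_events: "growth_break n0 w0 k \<in> events"
proof -
  have eq: "growth_break n0 w0 k = growth_path n0 w0 k \<inter>
      {\<omega>\<in>space M. real (W (Suc (n0 + k)) \<omega>) < \<rho>' * real (W (n0 + k) \<omega>)}"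
    unfolding growth_break_def growth_path_def by auto
  have "{\<omega>\<in>space M. real (W (Suc (n0 + k)) \<omega>) < \<rho>' * real (W (n0 + k) \<omega>)} \<in> events"
    by measurable
  then show ?thesis unfolding eq by (rule sets.Int[OF growth_path_events])
qed

lemma growth_failure_given_past:
  assumes A: "A \<in> sets (fam_sigma (past_idx n))" and v: "V0 \<le> real v"
  shows "prob (A \<inter> {\<omega>\<in>space M. real (step n v \<omega>) < \<rho>' * real v}) \<le> Cst / real v * prob A"
proof -
  have "(\<lambda>\<omega>. real (step n v \<omega>)) \<in> borel_measurable (fam_sigma (gen_idx n))"
    using step_measurable_gen by measurable
  then have "{\<omega>\<in>space (fam_sigma (gen_idx n)). real (step n v \<omega>) < \<rho>' * real v} \<in> sets (fam_sigma (gen_idx n))"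
    by measurable
  then have "prob (A \<inter> {\<omega>\<in>space M. real (step n v \<omega>) < \<rho>' * real v}) =
      prob A * prob {\<omega>\<in>space M. real (step n v \<omega>) < \<rho>' * real v}"
    using prob_Int_fam_sigma[OF past_gen_idx A] by simp
  also have "\<dots> \<le> prob A * (Cst / real v)"
    using growth_failure_bound[OF v] by (intro mult_left_mono) auto
  finally show ?thesis by (simp add: mult.commute)
qed

lemma growth_break_bound:
  assumes w0: "V0 \<le> real w0"
  shows "prob (growth_break n0 w0 k) \<le> Cst / (\<rho>' ^ k * real w0) * prob (growth_path n0 w0 k)"
proof -
  note c = constants
  define n where "n = n0 + k"
  define b where "b = Cst / (\<rho>' ^ k * real w0)"
  define A where "A = (\<lambda>v. growth_path n0 w0 k \<inter> {\<omega>\<in>space M. W n \<omega> = v})"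
  define F where "F = (\<lambda>v. {\<omega>\<in>space M. real (step n v \<omega>) < \<rho>' * real v})"
  have pos: "0 < \<rho>' ^ k * real w0" using c w0 by simp
  have AS: "A v \<in> sets (fam_sigma (past_idx n))" for v
    unfolding A_def n_def using growth_path_past W_level_set_past by (intro sets.Int) auto
  have AM: "A v \<in> events" and FM: "F v \<in> events" for v
    using AS sets_fam_sigma_subset unfolding F_def by (blast, measurable)
  have level: "prob (A v \<inter> F v) \<le> b * prob (A v)" for v
  proof (cases "A v = {}")
    case False
    then obtain \<omega> where "\<omega> \<in> A v" by blast
    then have big: "\<rho>' ^ k * real w0 \<le> real v"
      using growth_path_size unfolding A_def n_def by fastforce
    have "1 \<le> \<rho>' ^ k" using c(10) by simp
    then have "real w0 \<le> \<rho>' ^ k * real w0" using mult_right_mono[of 1 "\<rho>' ^ k" "real w0"] by simp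
    then have "V0 \<le> real v" using w0 big by linarith
    then have "prob (A v \<inter> F v) \<le> Cst / real v * prob (A v)"
      unfolding F_def by (rule growth_failure_given_past[OF AS])
    also have "\<dots> \<le> b * prob (A v)"
      unfolding b_def using c pos big by (intro mult_right_mono divide_left_mono) auto
    finally show ?thesis .
  qed simp
  have disj: "disjoint_family A" "disjoint_family (\<lambda>v. A v \<inter> F v)"
    unfolding disjoint_family_on_def A_def by auto
  have AF: "(\<lambda>v. prob (A v \<inter> F v)) sums prob (\<Union>v. A v \<inter> F v)"
    using AM FM disj(2) by (intro finite_measure_UNION) auto
  have "(\<lambda>v. prob (A v)) sums prob (\<Union>v. A v)"
    using AM disj(1) by (intro finite_measure_UNION) auto
  then have "(\<lambda>v. b * prob (A v)) sums (b * prob (\<Union>v. A v))" by (rule sums_mult)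
  then have "prob (\<Union>v. A v \<inter> F v) \<le> b * prob (\<Union>v. A v)"
    by (rule sums_le[OF level AF])
  moreover have "growth_break n0 w0 k = (\<Union>v. A v \<inter> F v)"
    unfolding growth_break_def A_def F_def n_def growth_path_def
    by (auto simp: wf_proc_Suc_step simp del: wf_proc.simps(2))
  moreover have "(\<Union>v. A v) = growth_path n0 w0 k" unfolding A_def growth_path_def by auto
  ultimately show ?thesis unfolding b_def by simp
qed

lemma growth_path_cover:
  "growth_path n0 w0 0 \<subseteq> (\<Inter>k. growth_path n0 w0 k) \<union> (\<Union>k. growth_break n0 w0 k)"
proof
  fix \<omega> assume \<omega>0: "\<omega> \<in> growth_path n0 w0 0"
  have "\<omega> \<in> growth_path n0 w0 k \<or> (\<exists>j<k. \<omega> \<in> growth_break n0 w0 j)" for k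
  proof (induction k)
    case 0 then show ?case using \<omega>0 by simp
  next
    case (Suc k)
    then show ?case
      unfolding growth_break_def growth_path_def by (auto simp: less_Suc_eq not_le)
  qed
  then show "\<omega> \<in> (\<Inter>k. growth_path n0 w0 k) \<union> (\<Union>k. growth_break n0 w0 k)" by blast
qed

lemma growth_forever_survives:
  assumes "1 \<le> w0" "\<omega> \<in> (\<Inter>k. growth_path n0 w0 k)"
  shows "\<not> (\<lambda>n. W n \<omega>) \<longlonglongrightarrow> 0"
proof
  assume "(\<lambda>n. W n \<omega>) \<longlonglongrightarrow> 0"
  then have "\<exists>n. W n \<omega> = 0" by (simp add: wf_proc_tendsto_0_iff)
  then obtain n where "W n \<omega> = 0" by blast
  then have "W (n0 + n) \<omega> = 0" using wf_proc_absorbing by (metis add.commute)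
  moreover have "\<rho>' ^ n * real w0 \<le> real (W (n0 + n) \<omega>)" using assms growth_path_size by blast
  moreover have "0 < \<rho>' ^ n * real w0" using constants assms by simp
  ultimately show False by simp
qed

lemma growth_break_union_bound:
  assumes w0: "V0 \<le> real w0"
  defines "\<theta> \<equiv> Cst * \<rho>' / (real w0 * (\<rho>' - 1))"
  shows "prob (\<Union>k. growth_break n0 w0 k) \<le> \<theta> * prob (growth_path n0 w0 0)"
proof -
  note c = constants
  define p0 where "p0 = prob (growth_path n0 w0 0)"
  define b where "b = (\<lambda>k. Cst / (\<rho>' ^ k * real w0))"
  have w1: "1 \<le> real w0" using w0 c by linarith
  have b0: "0 \<le> b k" for k unfolding b_def using c w1 by simp
  have p0: "0 \<le> p0" unfolding p0_def by simp
  have geom: "(\<lambda>k. b k * p0) sums (\<theta> * p0)"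
  proof -
    have "(\<lambda>k. (1 / \<rho>') ^ k) sums (1 / (1 - 1 / \<rho>'))" using c by (intro geometric_sums) simp
    then have "(\<lambda>k. (Cst / real w0 * p0) * (1 / \<rho>') ^ k) sums ((Cst / real w0 * p0) * (1 / (1 - 1 / \<rho>')))"
      by (rule sums_mult)
    moreover have "(Cst / real w0 * p0) * (1 / \<rho>') ^ k = b k * p0" for k
      unfolding b_def by (simp add: power_one_over field_simps)
    moreover have "(Cst / real w0 * p0) * (1 / (1 - 1 / \<rho>')) = \<theta> * p0"
      unfolding \<theta>_def using c w1 by (simp add: field_simps)
    ultimately show ?thesis by simp
  qed
  have bnd: "prob (growth_break n0 w0 k) \<le> b k * p0" for k
  proof -
    have "prob (growth_break n0 w0 k) \<le> b k * prob (growth_path n0 w0 k)"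
      unfolding b_def by (rule growth_break_bound[OF w0])
    also have "\<dots> \<le> b k * p0" unfolding p0_def using b0 growth_path_events growth_path_antimono[of 0 k]
      by (intro mult_left_mono finite_measure_mono) auto
    finally show ?thesis .
  qed
  have "summable (\<lambda>k. b k * p0)" using geom by (simp add: sums_iff)
  then have summ: "summable (\<lambda>k. prob (growth_break n0 w0 k))"
    by (rule summable_comparison_test'[where N=0]) (use bnd in simp)
  have "prob (\<Union>k. growth_break n0 w0 k) \<le> (\<Sum>k. prob (growth_break n0 w0 k))"
    using growth_break_events summ by (intro finite_measure_subadditive_countably) auto
  also have "\<dots> \<le> (\<Sum>k. b k * p0)"
    by (rule suminf_le[OF bnd summ]) (use geom in \<open>simp add: sums_iff\<close>)
  finally show ?thesis using geom by (simp add: sums_iff p0_def)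
qed

theorem survival:
  assumes reach: "\<And>j. 1 \<le> j \<Longrightarrow> \<exists>n. prob {\<omega>\<in>space M. W n \<omega> = j} > 0"
  shows "prob {\<omega>\<in>space M. (\<lambda>n. W n \<omega>) \<longlonglongrightarrow> 0} < 1"
proof -
  note c = constants
  define w0 where "w0 = nat \<lceil>V0 + 2 * Cst * \<rho>' / (\<rho>' - 1)\<rceil>"
  have q0: "0 \<le> 2 * Cst * \<rho>' / (\<rho>' - 1)" using c by simp
  then have w0ge: "V0 + 2 * Cst * \<rho>' / (\<rho>' - 1) \<le> real w0"
    unfolding w0_def using c by linarith
  then have w0V: "V0 \<le> real w0" and w1: "1 \<le> w0" using q0 c by linarith+
  define \<theta> where "\<theta> = Cst * \<rho>' / (real w0 * (\<rho>' - 1))"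
  have "2 * Cst * \<rho>' / (\<rho>' - 1) \<le> real w0" using w0ge c by linarith
  then have "2 * Cst * \<rho>' \<le> real w0 * (\<rho>' - 1)" using c by (simp add: field_simps)
  then have \<theta>: "\<theta> \<le> 1 / 2" unfolding \<theta>_def using c w1 by (simp add: field_simps)
  obtain n0 where "0 < prob {\<omega>\<in>space M. W n0 \<omega> = w0}" using reach w1 by blast
  then have p0: "0 < prob (growth_path n0 w0 0)" by (simp add: growth_path_def)
  define I where "I = (\<Inter>k. growth_path n0 w0 k)"
  have Iev: "I \<in> events" unfolding I_def using growth_path_events by auto
  have Bev: "(\<Union>k. growth_break n0 w0 k) \<in> events" using growth_break_events by auto
  have "prob (growth_path n0 w0 0) \<le> prob I + prob (\<Union>k. growth_break n0 w0 k)"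
    using growth_path_cover[of n0 w0] Iev Bev unfolding I_def
    by (meson finite_measure_mono measure_Un_le order_trans sets.Un)
  also have "\<dots> \<le> prob I + \<theta> * prob (growth_path n0 w0 0)"
    using growth_break_union_bound[OF w0V] unfolding \<theta>_def by simp
  finally have "prob (growth_path n0 w0 0) \<le> prob I + \<theta> * prob (growth_path n0 w0 0)" .
  moreover have "\<theta> * prob (growth_path n0 w0 0) \<le> 1 / 2 * prob (growth_path n0 w0 0)"
    using \<theta> p0 by (intro mult_right_mono) auto
  ultimately have I_pos: "0 < prob I" using p0 by linarith
  have "{\<omega>\<in>space M. (\<lambda>n. W n \<omega>) \<longlonglongrightarrow> 0} \<subseteq> space M - I"
    using growth_forever_survives[OF w1] unfolding I_def by blast
  then have "prob {\<omega>\<in>space M. (\<lambda>n. W n \<omega>) \<longlonglongrightarrow> 0} \<le> prob (space M - I)"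
    using Iev by (intro finite_measure_mono) auto
  also have "\<dots> = 1 - prob I" using Iev by (rule prob_compl)
  finally show ?thesis using I_pos by simp
qed

end

theorem mainTheorem6:
  fixes M :: "'a measure"
    and D :: "nat \<Rightarrow> nat \<Rightarrow> 'a \<Rightarrow> nat"
    and X R :: "nat \<Rightarrow> nat \<Rightarrow> 'a \<Rightarrow> real"
  assumes P: "prob_space M"
    and D_meas: "\<And>n k. D n k \<in> measurable M (count_space UNIV)"
    and X_meas: "\<And>n k. X n k \<in> borel_measurable M"
    and R_meas: "\<And>n k. R n k \<in> borel_measurable M"
    and indep: "prob_space.indep_vars M (\<lambda>_. borel) (wf_family D X R) wf_index"
    and D_id: "\<And>n k. 1 \<le> k \<Longrightarrow> distr M (count_space UNIV) (D n k) = distr M (count_space UNIV) (D 0 1)"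
    and X_id: "\<And>n k. 1 \<le> k \<Longrightarrow> distr M borel (X n k) = distr M borel (X 0 1)"
    and R_id: "\<And>n k. 1 \<le> k \<Longrightarrow> distr M borel (R n k) = distr M borel (R 0 1)"
    and X_nonneg: "\<And>n k \<omega>. \<omega> \<in> space M \<Longrightarrow> X n k \<omega> \<ge> 0"
    and R_nonneg: "\<And>n k \<omega>. \<omega> \<in> space M \<Longrightarrow> R n k \<omega> \<ge> 0"
    and F_cont: "\<And>x. isCont (cdf (distr M borel (X 0 1))) x"
    \<comment> \<open>(A1) and (A4): finite means and finite variances\<close>
    and D_int: "integrable M (\<lambda>\<omega>. real (D 0 1 \<omega>))"
    and X_int: "integrable M (X 0 1)"
    and R_int: "integrable M (R 0 1)"
    and D_sq: "integrable M (\<lambda>\<omega>. (real (D 0 1 \<omega>))\<^sup>2)"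
    and X_sq: "integrable M (\<lambda>\<omega>. (X 0 1 \<omega>)\<^sup>2)"
    and R_sq: "integrable M (\<lambda>\<omega>. (R 0 1 \<omega>)\<^sup>2)"
    and m_gt1: "1 < prob_space.expectation M (\<lambda>\<omega>. real (D 0 1 \<omega>))"
    and mu_pos: "0 < prob_space.expectation M (X 0 1)"
    \<comment> \<open>(A2)\<close>
    and p0: "prob_space.prob M {\<omega> \<in> space M. D 0 1 \<omega> = 0} > 0"
    and pk: "\<exists>k\<ge>2. prob_space.prob M {\<omega> \<in> space M. D 0 1 \<omega> = k} > 0"
    \<comment> \<open>(A3)\<close>
    and reach: "\<And>j. 1 \<le> j \<Longrightarrow> \<exists>n. prob_space.prob M {\<omega> \<in> space M. wf_proc D X R n \<omega> = j} > 0"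
  defines "m \<equiv> prob_space.expectation M (\<lambda>\<omega>. real (D 0 1 \<omega>))"
    and "\<mu> \<equiv> prob_space.expectation M (X 0 1)"
    and "r \<equiv> prob_space.expectation M (R 0 1)"
    and "qW \<equiv> prob_space.prob M {\<omega> \<in> space M. (\<lambda>n. wf_proc D X R n \<omega>) \<longlonglongrightarrow> 0}"
  shows "(\<mu> < r \<longrightarrow> qW < 1)
       \<and> (r \<le> m * \<mu> * (1 - sqrt (1 - 1 / m)) \<longrightarrow>
            prob_space.variance M (X 0 1) < (m * \<mu> - r)\<^sup>2 / (m * (m - 1)) - \<mu>\<^sup>2 \<longrightarrow>
            qW = 1)"
proof -
  interpret wf_iid M D X R
    by (intro wf_iid.intro wf_model.intro wf_model_axioms.intro wf_iid_axioms.intro P D_meas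
        X_meas R_meas indep X_nonneg R_nonneg D_id X_id R_id D_int X_int R_int D_sq X_sq R_sq)
  have "\<mu> < r \<longrightarrow> qW < 1"
  proof
    assume "\<mu> < r"
    then interpret wf_growth M D X R
      by unfold_locales (use m_gt1 mu_pos in \<open>simp_all add: \<mu>_def r_def\<close>)
    show "qW < 1" unfolding qW_def using survival reach by blast
  qed
  moreover have "r \<le> m * \<mu> * (1 - sqrt (1 - 1 / m)) \<longrightarrow>
      variance (X 0 1) < (m * \<mu> - r)\<^sup>2 / (m * (m - 1)) - \<mu>\<^sup>2 \<longrightarrow> qW = 1"
    using extinction_certain m_gt1 mu_pos unfolding m_def \<mu>_def r_def qW_def by blast
  ultimately show ?thesis by blast
qed

end
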